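(* Let $A,A^*\in\mathrm{Mat}_{d+1}(\mathbb K)$ be as in the setup below. The following are equivalent: (i) $A,A^*$ is a Leonard pair; (ii) there exist an invertible $G\in\mathrm{Mat}_{d+1}(\mathbb K)$ and nonzero $\phi_1,\ldots,\phi_d\in\mathbb K$ such that $G^{-1}AG$ is the lower bidiagonal matrix with diagonal entries $\theta_d,\theta_{d-1},\ldots,\theta_0$ (i.e. $(i,i)$ entry $\theta_{d-i}$), all subdiagonal entries equal to $1$, and all other entries $0$; and $G^{-1}A^*G$ is the upper bidiagonal matrix with $(i,i)$ entry $\theta^*_i$, $(i-1,i)$ entry $\phi_i$ for $1\le i\le d$, and all other entries $0$. Moreover, if (i),(ii) hold, then $\phi_1,\ldots,\phi_d$ is the split sequence for $A,A^*$ with respect to the orderings $E_d,E_{d-1},\ldots,E_0$ and $E^*_0,E^*_1,\ldots,E^*_d$.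
   Context: Let $\mathbb K$ be a field and $d\ge0$ an integer; rows/columns are indexed $0,\ldots,d$. Let $\theta_0,\ldots,\theta_d\in\mathbb K$ be mutually distinct, $\theta^*_0,\ldots,\theta^*_d\in\mathbb K$ mutually distinct, and $\varphi_1,\ldots,\varphi_d\in\mathbb K$ nonzero. Let $A\in\mathrm{Mat}_{d+1}(\mathbb K)$ be lower bidiagonal with $A_{ii}=\theta_i$, $A_{i+1,i}=1$ and all other entries $0$; let $A^*$ be upper bidiagonal with $A^*_{ii}=\theta^*_i$, $A^*_{i-1,i}=\varphi_i$ and all other entries $0$. For $0\le i\le d$ let $E_i$ (resp. $E^*_i$) be the primitive idempotent of $A$ (resp. $A^*$) for $\theta_i$ (resp. $\theta^*_i$), i.e. $E_i=\prod_{j\ne i}(A-\theta_jI)/(\theta_i-\theta_j)$. A square matrix is tridiagonal if every nonzero entry lies on the diagonal, subdiagonal or superdiagonal, and irreducible tridiagonal if moreover all sub- and superdiagonal entries are nonzero. $A,A^*$ is a Leonard pair if there is a basis of $\mathbb K^{d+1}$ in which $A$ is represented by an irreducible tridiagonal matrix and $A^*$ by a diagonal one, and a basis in which $A^*$ is irreducible tridiagonal and $A$ diagonal. A decomposition of $V=\mathbb K^{d+1}$ is a sequence $V_0,\ldots,V_d$ of 1-dimensional subspaces with $V$ their direct sum. Given orderings $F_0,\ldots,F_d$ of the primitive idempotents of $A$ (with eigenvalues $\eta_i$) and $F^*_0,\ldots,F^*_d$ of those of $A^*$ (eigenvalues $\eta^*_i$), the decomposition is split w.r.t. these orderings if $(A-\eta_iI)V_i=V_{i+1}$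 ($0\le i\le d-1$), $(A-\eta_dI)V_d=0$, $(A^*-\eta^*_iI)V_i=V_{i-1}$ ($1\le i\le d$), $(A^*-\eta^*_0I)V_0=0$. Such a split decomposition is unique if it exists, and for $1\le i\le d$, $V_i$ is an eigenspace of $(A-\eta_{i-1}I)(A^*-\eta^*_iI)$ with nonzero eigenvalue $\psi_i$; the sequence $\psi_1,\ldots,\psi_d$ is called the split sequence for $A,A^*$ with respect to these orderings. *)

theory Defs
  imports "Jordan_Normal_Form.Matrix"
begin

definition lower_bidiag :: "nat \<Rightarrow> (nat \<Rightarrow> 'a::field) \<Rightarrow> 'a mat" where
  "lower_bidiag d th = mat (Suc d) (Suc d)
     (\<lambda>(i,j). if i = j then th i else if i = j + 1 then 1 else 0)"

definition upper_bidiag :: "nat \<Rightarrow> (nat \<Rightarrow> 'a::field) \<Rightarrow> (nat \<Rightarrow> 'a) \<Rightarrow> 'a mat" where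
  "upper_bidiag d ths ph = mat (Suc d) (Suc d)
     (\<lambda>(i,j). if i = j then ths i else if j = i + 1 then ph j else 0)"

definition tridiagonal :: "'a::zero mat \<Rightarrow> bool" where
  "tridiagonal B \<longleftrightarrow> (\<forall>i < dim_row B. \<forall>j < dim_col B. (j > i + 1 \<or> i > j + 1) \<longrightarrow> B $$ (i,j) = 0)"

definition irred_tridiagonal :: "'a::zero mat \<Rightarrow> bool" where
  "irred_tridiagonal B \<longleftrightarrow> tridiagonal B \<and>
     (\<forall>i. i + 1 < dim_row B \<longrightarrow> i + 1 < dim_col B \<longrightarrow> B $$ (i+1,i) \<noteq> 0 \<and> B $$ (i,i+1) \<noteq> 0)"

definition leonard_pair :: "'a::field mat \<Rightarrow> 'a mat \<Rightarrow> bool" where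
  "leonard_pair A As \<longleftrightarrow>
     (\<exists>B Bs P Q. similar_mat_wit A B P Q \<and> similar_mat_wit As Bs P Q \<and>
                 irred_tridiagonal B \<and> diagonal_mat Bs) \<and>
     (\<exists>B Bs P Q. similar_mat_wit A B P Q \<and> similar_mat_wit As Bs P Q \<and>
                 diagonal_mat B \<and> irred_tridiagonal Bs)"

definition decomposition :: "nat \<Rightarrow> (nat \<Rightarrow> 'a::field vec set) \<Rightarrow> bool" where
  "decomposition d V \<longleftrightarrow>
     (\<forall>i \<le> d. \<exists>v. v \<in> carrier_vec (Suc d) \<and> v \<noteq> 0\<^sub>v (Suc d) \<and> V i = {c \<cdot>\<^sub>v v | c. True}) \<and>
     (\<forall>x \<in> carrier_vec (Suc d). \<exists>!u. (\<forall>i \<le> d. u i \<in> V i) \<and> (\<forall>i > d. u i = 0\<^sub>v (Suc d)) \<and>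
        x = vec (Suc d) (\<lambda>k. \<Sum>i\<le>d. u i $ k))"

text \<open>Split decomposition with respect to orderings of the primitive idempotents whose
  eigenvalues are eta 0, ..., eta d (for A) and etas 0, ..., etas d (for As).\<close>
definition split_decomposition ::
  "nat \<Rightarrow> 'a::field mat \<Rightarrow> 'a mat \<Rightarrow> (nat \<Rightarrow> 'a) \<Rightarrow> (nat \<Rightarrow> 'a) \<Rightarrow> (nat \<Rightarrow> 'a vec set) \<Rightarrow> bool" where
  "split_decomposition d A As eta etas V \<longleftrightarrow> decomposition d V \<and>
     (\<forall>i < d. (\<lambda>v. (A - eta i \<cdot>\<^sub>m 1\<^sub>m (Suc d)) *\<^sub>v v) ` V i = V (i+1)) \<and>
     (\<lambda>v. (A - eta d \<cdot>\<^sub>m 1\<^sub>m (Suc d)) *\<^sub>v v) ` V d = {0\<^sub>v (Suc d)} \<and>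
     (\<forall>i \<in> {1..d}. (\<lambda>v. (As - etas i \<cdot>\<^sub>m 1\<^sub>m (Suc d)) *\<^sub>v v) ` V i = V (i-1)) \<and>
     (\<lambda>v. (As - etas 0 \<cdot>\<^sub>m 1\<^sub>m (Suc d)) *\<^sub>v v) ` V 0 = {0\<^sub>v (Suc d)}"

definition split_sequence ::
  "nat \<Rightarrow> 'a::field mat \<Rightarrow> 'a mat \<Rightarrow> (nat \<Rightarrow> 'a) \<Rightarrow> (nat \<Rightarrow> 'a) \<Rightarrow> (nat \<Rightarrow> 'a) \<Rightarrow> bool" where
  "split_sequence d A As eta etas psi \<longleftrightarrow>
     (\<exists>V. split_decomposition d A As eta etas V \<and>
        (\<forall>i \<in> {1..d}. \<forall>v \<in> V i.
           ((A - eta (i-1) \<cdot>\<^sub>m 1\<^sub>m (Suc d)) * (As - etas i \<cdot>\<^sub>m 1\<^sub>m (Suc d))) *\<^sub>v v = psi i \<cdot>\<^sub>v v))"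

end

theory Submission
  imports Defs "Jordan_Normal_Form.Determinant"
begin

text \<open>
  Let P be the matrix of eigenvectors of A, which is lower unitriangular, and let Bs = P^-1 A* P.
  Bs vanishes above its superdiagonal, which it shares with A*. Both (i) and (ii) are equivalent to
  Bs being irreducible tridiagonal.

  For (i): A, A* is a Leonard pair iff some invertible S satisfies S A = A^T S and S A* = A*^T S.
  Such an S is obtained from the diagonal weights symmetrizing an irreducible tridiagonal matrix;
  conversely, in any eigenbasis of an operator with simple spectrum S becomes diagonal, so there
  the other operator is symmetric up to nonzero diagonal weights, and a Hessenberg matrix with
  this property is irreducible tridiagonal.

  For (ii): if Bs is irreducible tridiagonal, the Krylov vectors
  g_i = (A - \<theta>_d)...(A - \<theta>_(d-i+1)) e_0 form the required basis G. Conversely, for any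
  such G the matrices G^-1 P and P^-1 G are anti-triangular, and conjugating by them exchanges the
  Hessenberg shape of G^-1 A* G with that of Bs. The lines spanned by the columns of G form the
  split decomposition, and the superdiagonal of G^-1 A* G is its split sequence.
\<close>

lemma mult_mat_index_sum:
  assumes "A \<in> carrier_mat n m" "B \<in> carrier_mat m p" "i < n" "j < p"
  shows "(A * B) $$ (i,j) = (\<Sum>l<m. A $$ (i,l) * B $$ (l,j))"
  using assms by (simp add: scalar_prod_def lessThan_atLeast0)

lemma sum_lessThan_single:
  fixes n k :: nat
  assumes "k < n" "\<And>l. l < n \<Longrightarrow> l \<noteq> k \<Longrightarrow> f l = 0"
  shows "(\<Sum>l<n. f l) = (f k :: 'a::comm_monoid_add)"
proof -
  have "(\<Sum>l<n. f l) = (\<Sum>l<n. if l = k then f k else 0)"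
    by (rule sum.cong) (use assms in auto)
  also have "\<dots> = f k" using assms(1) by (subst sum.delta) auto
  finally show ?thesis .
qed

lemma mult_mat_index_single:
  assumes "A \<in> carrier_mat n m" "B \<in> carrier_mat m p" "i < n" "j < p" "l0 < m"
    and "\<And>l. l < m \<Longrightarrow> l \<noteq> l0 \<Longrightarrow> A $$ (i,l) * B $$ (l,j) = 0"
  shows "(A * B) $$ (i,j) = A $$ (i,l0) * B $$ (l0,j)"
  unfolding mult_mat_index_sum[OF assms(1-4)] using assms(5,6) by (rule sum_lessThan_single)

lemma mult_mat_index_zero:
  assumes "A \<in> carrier_mat n m" "B \<in> carrier_mat m p" "i < n" "j < p"
    and "\<And>l. l < m \<Longrightarrow> A $$ (i,l) * B $$ (l,j) = 0"
  shows "(A * B) $$ (i,j) = 0"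
  unfolding mult_mat_index_sum[OF assms(1-4)] using assms(5) by simp

lemma lower_bidiag_carrier [simp]: "lower_bidiag d f \<in> carrier_mat (Suc d) (Suc d)"
  and upper_bidiag_carrier [simp]: "upper_bidiag d f g \<in> carrier_mat (Suc d) (Suc d)"
  by (simp_all add: lower_bidiag_def upper_bidiag_def)

lemma lower_bidiag_dim [simp]:
  "dim_row (lower_bidiag d f) = Suc d" "dim_col (lower_bidiag d f) = Suc d"
  and upper_bidiag_dim [simp]:
  "dim_row (upper_bidiag d f g) = Suc d" "dim_col (upper_bidiag d f g) = Suc d"
  by (simp_all add: lower_bidiag_def upper_bidiag_def)

lemma lower_bidiag_mult_index:
  assumes M: "M \<in> carrier_mat (Suc d) p" and k: "k \<le> d" and j: "j < p"
  shows "(lower_bidiag d f * M) $$ (k,j) = f k * M $$ (k,j) + (if 0 < k then M $$ (k-1,j) else 0)"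
proof -
  have "(lower_bidiag d f * M) $$ (k,j) = (\<Sum>l<Suc d. lower_bidiag d f $$ (k,l) * M $$ (l,j))"
    using k j by (intro mult_mat_index_sum[OF _ M]) auto
  also have "\<dots> = (\<Sum>l<Suc d. (if l = k then f k * M $$ (k,j) else 0) +
       (if l = k - 1 then (if 0 < k then M $$ (k-1,j) else 0) else 0))"
    by (rule sum.cong[OF refl]) (use k j in \<open>auto simp: lower_bidiag_def\<close>)
  also have "\<dots> = f k * M $$ (k,j) + (if 0 < k then M $$ (k-1,j) else 0)"
    using k unfolding sum.distrib by (auto simp del: sum.lessThan_Suc)
  finally show ?thesis .
qed

lemma mult_lower_bidiag_index:
  assumes M: "M \<in> carrier_mat p (Suc d)" and k: "k < p" and j: "j \<le> d"
  shows "(M * lower_bidiag d f) $$ (k,j) = M $$ (k,j) * f j + (if j < d then M $$ (k,j+1) else 0)"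
proof -
  have "(M * lower_bidiag d f) $$ (k,j) = (\<Sum>l<Suc d. M $$ (k,l) * lower_bidiag d f $$ (l,j))"
    using k j by (intro mult_mat_index_sum[OF M]) auto
  also have "\<dots> = (\<Sum>l<Suc d. (if l = j then M $$ (k,j) * f j else 0) +
       (if l = j + 1 then (if j < d then M $$ (k,j+1) else 0) else 0))"
    by (rule sum.cong[OF refl]) (use k j in \<open>auto simp: lower_bidiag_def\<close>)
  also have "\<dots> = M $$ (k,j) * f j + (if j < d then M $$ (k,j+1) else 0)"
    using j unfolding sum.distrib by (auto simp del: sum.lessThan_Suc)
  finally show ?thesis .
qed

lemma upper_bidiag_mult_index:
  assumes M: "M \<in> carrier_mat (Suc d) p" and k: "k \<le> d" and j: "j < p"
  shows "(upper_bidiag d f g * M) $$ (k,j) =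
    f k * M $$ (k,j) + (if k < d then g (k+1) * M $$ (k+1,j) else 0)"
proof -
  have "(upper_bidiag d f g * M) $$ (k,j) = (\<Sum>l<Suc d. upper_bidiag d f g $$ (k,l) * M $$ (l,j))"
    using k j by (intro mult_mat_index_sum[OF _ M]) auto
  also have "\<dots> = (\<Sum>l<Suc d. (if l = k then f k * M $$ (k,j) else 0) +
       (if l = k + 1 then (if k < d then g (k+1) * M $$ (k+1,j) else 0) else 0))"
    by (rule sum.cong[OF refl]) (use k j in \<open>auto simp: upper_bidiag_def\<close>)
  also have "\<dots> = f k * M $$ (k,j) + (if k < d then g (k+1) * M $$ (k+1,j) else 0)"
    using k unfolding sum.distrib by (auto simp del: sum.lessThan_Suc)
  finally show ?thesis .
qed

lemma mult_upper_bidiag_index: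
  assumes M: "M \<in> carrier_mat p (Suc d)" and k: "k < p" and j: "j \<le> d"
  shows "(M * upper_bidiag d f g) $$ (k,j) =
    M $$ (k,j) * f j + (if 0 < j then M $$ (k,j-1) * g j else 0)"
proof -
  have "(M * upper_bidiag d f g) $$ (k,j) = (\<Sum>l<Suc d. M $$ (k,l) * upper_bidiag d f g $$ (l,j))"
    using k j by (intro mult_mat_index_sum[OF M]) auto
  also have "\<dots> = (\<Sum>l<Suc d. (if l = j then M $$ (k,j) * f j else 0) +
       (if l = j - 1 then (if 0 < j then M $$ (k,j-1) * g j else 0) else 0))"
    by (rule sum.cong[OF refl]) (use k j in \<open>auto simp: upper_bidiag_def\<close>)
  also have "\<dots> = M $$ (k,j) * f j + (if 0 < j then M $$ (k,j-1) * g j else 0)"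
    using j unfolding sum.distrib by (auto simp del: sum.lessThan_Suc)
  finally show ?thesis .
qed

lemma lower_bidiag_mult_vec_index:
  assumes v: "v \<in> carrier_vec (Suc d)" and k: "k \<le> d"
  shows "(lower_bidiag d f *\<^sub>v v) $ k = f k * v $ k + (if 0 < k then v $ (k-1) else 0)"
proof -
  have "(lower_bidiag d f *\<^sub>v v) $ k = (\<Sum>l<Suc d. lower_bidiag d f $$ (k,l) * v $ l)"
    using k v by (simp add: scalar_prod_def lessThan_atLeast0)
  also have "\<dots> = (\<Sum>l<Suc d. (if l = k then f k * v $ k else 0) +
       (if l = k - 1 then (if 0 < k then v $ (k-1) else 0) else 0))"
    by (rule sum.cong[OF refl]) (use k in \<open>auto simp: lower_bidiag_def\<close>)
  also have "\<dots> = f k * v $ k + (if 0 < k then v $ (k-1) else 0)"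
    using k unfolding sum.distrib by (auto simp del: sum.lessThan_Suc)
  finally show ?thesis .
qed

lemma lower_bidiag_minus_smult_one:
  "lower_bidiag d f - c \<cdot>\<^sub>m 1\<^sub>m (Suc d) = lower_bidiag d (\<lambda>i. f i - c)"
  by (rule eq_matI) (auto simp: lower_bidiag_def)

lemma lower_bidiag_eigvec_zeros:
  fixes d p :: nat and f x :: "nat \<Rightarrow> 'a::field"
  assumes eq: "\<forall>m\<le>d. f m * x m + (if 0 < m then x (m-1) else 0) = c * x m"
    and ne: "\<forall>m<p. f m \<noteq> c" and p: "p \<le> d"
  shows "\<forall>m<p. x m = 0"
proof (intro allI impI)
  fix m assume "m < p"
  then show "x m = 0"
  proof (induction m)
    case 0
    then show ?case using eq[rule_format, of 0] ne p by auto
  next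
    case (Suc m)
    then have "f (Suc m) * x (Suc m) = c * x (Suc m)" using eq[rule_format, of "Suc m"] p by auto
    then show ?case using ne Suc.prems by auto
  qed
qed

lemma lower_bidiag_left_eigvec_zeros:
  fixes d p :: nat and f x :: "nat \<Rightarrow> 'a::field"
  assumes eq: "\<forall>i\<le>d. x i * f i + (if i < d then x (i+1) else 0) = c * x i"
    and ne: "\<forall>i. p < i \<longrightarrow> i \<le> d \<longrightarrow> f i \<noteq> c"
  shows "\<forall>i. p < i \<longrightarrow> i \<le> d \<longrightarrow> x i = 0"
proof (intro allI impI)
  fix i assume "p < i" "i \<le> d"
  then show "x i = 0"
  proof (induction "d - i" arbitrary: i rule: less_induct)
    case less
    then have "x i * f i = c * x i" using eq[rule_format, of i] by (cases "i < d") auto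
    then show ?case using ne less.prems by (auto simp: mult.commute)
  qed
qed

lemma transpose_mat_diag [simp]: "transpose_mat (mat_diag n f) = mat_diag n f"
  by (rule eq_matI) (auto simp: mat_diag_def)

lemma diagonal_mat_diag: "diagonal_mat (mat_diag n f)"
  by (simp add: diagonal_mat_def mat_diag_def)

lemma mat_diag_mult_vec_index:
  assumes "v \<in> carrier_vec n" "a < n"
  shows "(mat_diag n f *\<^sub>v v) $ a = f a * v $ a"
proof -
  have "(mat_diag n f *\<^sub>v v) $ a = (\<Sum>i<n. mat_diag n f $$ (a,i) * v $ i)"
    using assms by (simp add: scalar_prod_def lessThan_atLeast0 mat_diag_def)
  also have "\<dots> = mat_diag n f $$ (a,a) * v $ a"
    using assms by (intro sum_lessThan_single) (auto simp: mat_diag_def)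
  finally show ?thesis using assms by (simp add: mat_diag_def)
qed

lemma mat_diag_minus_smult_one:
  fixes f :: "nat \<Rightarrow> 'a::ring_1"
  shows "mat_diag n f - c \<cdot>\<^sub>m 1\<^sub>m n = mat_diag n (\<lambda>i. f i - c)"
  by (rule eq_matI) (auto simp: mat_diag_def)

lemma det_mat_diag: "det (mat_diag n f) = (\<Prod>i<n. f i)"
  by (subst det_upper_triangular[of _ n])
    (auto simp: mat_diag_def prod_list_diag_prod atLeast0LessThan)

lemma lower_triangular_mult_col_zeros:
  fixes P X :: "'a::field mat"
  assumes P: "P \<in> carrier_mat n n" and X: "X \<in> carrier_mat n m" and j: "j < m"
    and tri: "\<forall>k<n. \<forall>l<n. k < l \<longrightarrow> P $$ (k,l) = 0" and diag: "\<forall>k<n. P $$ (k,k) \<noteq> 0"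
    and zero: "\<forall>k<r. (P * X) $$ (k,j) = 0"
  shows "\<forall>k<r. k < n \<longrightarrow> X $$ (k,j) = 0"
    and "r < n \<Longrightarrow> (P * X) $$ (r,j) = P $$ (r,r) * X $$ (r,j)"
proof -
  have step: "(P * X) $$ (k,j) = P $$ (k,k) * X $$ (k,j)" if "k < n" "\<forall>l<k. X $$ (l,j) = 0" for k
    using that tri by (intro mult_mat_index_single[OF P X _ j]) (auto simp: neq_iff)
  have "X $$ (k,j) = 0" if "k < r" "k < n" for k
    using that
  proof (induction k rule: less_induct)
    case (less k)
    then show ?case using step[of k] zero diag by auto
  qed
  then show "\<forall>k<r. k < n \<longrightarrow> X $$ (k,j) = 0" by blast
  then show "r < n \<Longrightarrow> (P * X) $$ (r,j) = P $$ (r,r) * X $$ (r,j)" using step by auto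
qed

lemma upper_triangular_mult_col_zeros:
  fixes P X :: "'a::field mat"
  assumes P: "P \<in> carrier_mat n n" and X: "X \<in> carrier_mat n m" and j: "j < m"
    and tri: "\<forall>k<n. \<forall>l<n. l < k \<longrightarrow> P $$ (k,l) = 0" and diag: "\<forall>k<n. P $$ (k,k) \<noteq> 0"
    and zero: "\<forall>k<n. r < k \<longrightarrow> (P * X) $$ (k,j) = 0"
  shows "\<forall>k<n. r < k \<longrightarrow> X $$ (k,j) = 0"
    and "r < n \<Longrightarrow> (P * X) $$ (r,j) = P $$ (r,r) * X $$ (r,j)"
proof -
  have step: "(P * X) $$ (k,j) = P $$ (k,k) * X $$ (k,j)"
    if "k < n" "\<forall>l<n. k < l \<longrightarrow> X $$ (l,j) = 0" for k
    using that tri by (intro mult_mat_index_single[OF P X _ j]) (auto simp: neq_iff)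
  have "X $$ (k,j) = 0" if "r < k" "k < n" for k
    using that
  proof (induction "n - k" arbitrary: k rule: less_induct)
    case less
    then show ?case using step[of k] zero diag by auto
  qed
  then show "\<forall>k<n. r < k \<longrightarrow> X $$ (k,j) = 0" by blast
  then show "r < n \<Longrightarrow> (P * X) $$ (r,j) = P $$ (r,r) * X $$ (r,j)" using step by auto
qed

lemma det_lower_unitriangular:
  assumes "P \<in> carrier_mat n n" "\<forall>i<n. \<forall>j<n. i < j \<longrightarrow> P $$ (i,j) = 0" "\<forall>i<n. P $$ (i,i) = 1"
  shows "det P = 1"
  using assms by (subst det_lower_triangular[of n]) (auto simp: prod_list_diag_prod)

lemma det_upper_unitriangular:
  assumes "P \<in> carrier_mat n n" "\<forall>i<n. \<forall>j<n. j < i \<longrightarrow> P $$ (i,j) = 0" "\<forall>i<n. P $$ (i,i) = 1"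
  shows "det P = 1"
  using assms by (subst det_upper_triangular[of _ n]) (auto simp: upper_triangular_def prod_list_diag_prod)

text \<open>For singular P this is the zero matrix.\<close>

definition inverse_mat :: "'a::field mat \<Rightarrow> 'a mat" where
  "inverse_mat P = inverse (det P) \<cdot>\<^sub>m adj_mat P"

lemma inverse_mat:
  assumes P: "P \<in> carrier_mat n n" and det: "det P \<noteq> 0"
  shows "inverse_mat P \<in> carrier_mat n n" "P * inverse_mat P = 1\<^sub>m n" "inverse_mat P * P = 1\<^sub>m n"
  using adj_mat[OF P] det P unfolding inverse_mat_def
  by (auto simp: mult_smult_distrib[of _ n n _ n] mult_smult_assoc_mat[of _ n n _ n])

lemma det_nonzero_if_right_inverse:
  assumes "P \<in> carrier_mat n n" "Q \<in> carrier_mat n n" "P * Q = 1\<^sub>m n"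
  shows "det P \<noteq> 0"
  using det_mult[OF assms(1,2)] assms(3) by auto

lemma similar_mat_wit_inverse_mat:
  assumes M: "M \<in> carrier_mat n n" and D: "D \<in> carrier_mat n n" and P: "P \<in> carrier_mat n n"
    and det: "det P \<noteq> 0" and MP: "M * P = P * D"
  shows "similar_mat_wit M D P (inverse_mat P)"
proof (rule similar_mat_witI[OF inverse_mat(2,3)[OF P det] _ M D P inverse_mat(1)[OF P det]])
  have "P * D * inverse_mat P = M * (P * inverse_mat P)"
    using M D P inverse_mat(1)[OF P det] by (simp flip: MP)
  then show "M = P * D * inverse_mat P" using M inverse_mat(2)[OF P det] by simp
qed

lemma similar_mat_wit_conj:
  assumes M: "M \<in> carrier_mat n n" and P: "P \<in> carrier_mat n n" and Q: "Q \<in> carrier_mat n n"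
    and PQ: "P * Q = 1\<^sub>m n" and QP: "Q * P = 1\<^sub>m n"
  shows "similar_mat_wit M (Q * M * P) P Q"
proof (rule similar_mat_witI[OF PQ QP _ M _ P Q])
  have "P * (Q * M * P) * Q = (P * Q) * M * (P * Q)"
    using M P Q by (simp add: assoc_mult_mat[of _ n n _ n _ n])
  then show "M = P * (Q * M * P) * Q" using M PQ by simp
qed (use M P Q in auto)

lemma similar_mat_wit_carrier:
  assumes "similar_mat_wit A B P Q" "B \<in> carrier_mat n n"
  shows "A \<in> carrier_mat n n"
proof -
  have "A \<in> carrier_mat (dim_row A) (dim_row A)" "B \<in> carrier_mat (dim_row A) (dim_row A)"
    using similar_mat_witD(4,5)[OF refl assms(1)] .
  then show ?thesis using assms(2) by (metis carrier_matD(1))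
qed

lemma similar_mat_wit_mult_eqs:
  assumes sim: "similar_mat_wit A B P Q" and A: "A \<in> carrier_mat n n"
  shows "A * P = P * B" "Q * A = B * Q"
proof -
  note s = similar_mat_witD2[OF A sim]
  have "A * P = (P * B) * (Q * P)" unfolding s(3) using s(5-7)
    by (simp add: assoc_mult_mat[of _ n n _ n _ n])
  then show "A * P = P * B" using s by simp
  have "Q * A = (Q * P) * (B * Q)" unfolding s(3) using s(5-7)
    by (simp add: assoc_mult_mat[of _ n n _ n _ n])
  then show "Q * A = B * Q" using s by simp
qed

lemma intertwine_mult:
  fixes X M N P D :: "'a::semiring_1 mat"
  assumes X: "X \<in> carrier_mat n n" and M: "M \<in> carrier_mat n n" and N: "N \<in> carrier_mat n n"
    and P: "P \<in> carrier_mat n n" and D: "D \<in> carrier_mat n n"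
    and XM: "X * M = N * X" and MP: "M * P = P * D"
  shows "N * (X * P) = (X * P) * D"
proof -
  have "N * (X * P) = (X * M) * P" using X N P by (simp add: XM assoc_mult_mat[of _ n n _ n _ n])
  also have "\<dots> = X * (P * D)" using X M P by (simp add: MP flip: assoc_mult_mat[of X n n M n P n])
  also have "\<dots> = (X * P) * D" using X P D by (simp add: assoc_mult_mat[of _ n n _ n _ n])
  finally show ?thesis .
qed

lemma mult_minus_smult_one_intertwine:
  fixes Q M D :: "'a::comm_ring_1 mat"
  assumes Q: "Q \<in> carrier_mat n n" and M: "M \<in> carrier_mat n n" and D: "D \<in> carrier_mat n n"
    and QM: "Q * M = D * Q"
  shows "Q * (M - c \<cdot>\<^sub>m 1\<^sub>m n) = (D - c \<cdot>\<^sub>m 1\<^sub>m n) * Q"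
proof -
  have "Q * (M - c \<cdot>\<^sub>m 1\<^sub>m n) = Q * M - Q * (c \<cdot>\<^sub>m 1\<^sub>m n)"
    using Q M by (intro mult_minus_distrib_mat) auto
  also have "\<dots> = D * Q - c \<cdot>\<^sub>m Q" using Q by (simp add: QM mult_smult_distrib[OF Q one_carrier_mat])
  also have "\<dots> = (D - c \<cdot>\<^sub>m 1\<^sub>m n) * Q"
    using Q D by (simp add: minus_mult_distrib_mat[of _ n n] mult_smult_assoc_mat[of _ n n])
  finally show ?thesis .
qed

subsection \<open>Symmetrizers\<close>

definition diag_symmetrizable :: "'a::field mat \<Rightarrow> bool" where
  "diag_symmetrizable N \<longleftrightarrow> (\<exists>w. (\<forall>i<dim_row N. w i \<noteq> 0) \<and>
     (\<forall>i<dim_row N. \<forall>j<dim_row N. w i * N $$ (i,j) = w j * N $$ (j,i)))"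

lemma diag_symmetrizable_zero_iff:
  assumes "diag_symmetrizable N" "i < dim_row N" "j < dim_row N"
  shows "N $$ (i,j) = 0 \<longleftrightarrow> N $$ (j,i) = 0"
proof -
  obtain w where "w i \<noteq> 0" "w j \<noteq> 0" "w i * N $$ (i,j) = w j * N $$ (j,i)"
    using assms unfolding diag_symmetrizable_def by blast
  then show ?thesis by (metis mult_eq_0_iff)
qed

lemma irred_tridiagonal_diag_symmetrizable:
  assumes N: "N \<in> carrier_mat n n" and irr: "irred_tridiagonal N"
  shows "diag_symmetrizable N"
proof -
  have off: "N $$ (i,j) = 0" if "i < n" "j < n" "i + 1 < j \<or> j + 1 < i" for i j
    using irr N that unfolding irred_tridiagonal_def tridiagonal_def by auto
  have nz: "N $$ (i+1,i) \<noteq> 0" "N $$ (i,i+1) \<noteq> 0" if "i + 1 < n" for i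
    using irr N that unfolding irred_tridiagonal_def by auto
  define w where "w k = (\<Prod>l<k. N $$ (l,l+1) / N $$ (l+1,l))" for k
  have w_Suc: "w (Suc k) = w k * N $$ (k,k+1) / N $$ (k+1,k)" for k
    by (simp add: w_def)
  have "w k \<noteq> 0" if "k < n" for k
    using that nz by (auto simp: w_def)
  moreover have "w i * N $$ (i,j) = w j * N $$ (j,i)" if "i < n" "j < n" for i j
  proof -
    consider "j = i + 1" | "i = j + 1" | "i = j" | "i + 1 < j \<or> j + 1 < i" by linarith
    then show ?thesis
    proof cases
      case 1
      then show ?thesis using w_Suc[of i] nz[of i] that by simp
    next
      case 2
      then show ?thesis using w_Suc[of j] nz[of j] that by simp
    qed (use off that in auto)
  qed
  ultimately show ?thesis using N unfolding diag_symmetrizable_def by auto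
qed

lemma irred_tridiagonalI:
  assumes N: "N \<in> carrier_mat n n"
    and upper: "\<forall>i<n. \<forall>j<n. i + 1 < j \<longrightarrow> N $$ (i,j) = 0"
    and lower: "\<forall>i<n. \<forall>j<n. j + 1 < i \<longrightarrow> N $$ (i,j) = 0"
    and super: "\<forall>i. i + 1 < n \<longrightarrow> N $$ (i,i+1) \<noteq> 0"
    and sub: "\<forall>i. i + 1 < n \<longrightarrow> N $$ (i+1,i) \<noteq> 0"
  shows "irred_tridiagonal N"
  unfolding irred_tridiagonal_def tridiagonal_def
proof (intro conjI allI impI)
  fix i j assume "i < dim_row N" "j < dim_col N" "i + 1 < j \<or> j + 1 < i"
  then show "N $$ (i,j) = 0" using N upper lower by auto
next
  fix i assume "i + 1 < dim_row N"
  then show "N $$ (i+1,i) \<noteq> 0" "N $$ (i,i+1) \<noteq> 0" using N super sub by auto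
qed

lemma irred_tridiagonal_if_symmetric_zeros:
  assumes N: "N \<in> carrier_mat n n"
    and sym: "\<forall>i<n. \<forall>j<n. N $$ (i,j) = 0 \<longleftrightarrow> N $$ (j,i) = 0"
    and upper: "\<forall>i<n. \<forall>j<n. i + 1 < j \<longrightarrow> N $$ (i,j) = 0"
    and super: "\<forall>i. i + 1 < n \<longrightarrow> N $$ (i,i+1) \<noteq> 0"
  shows "irred_tridiagonal N"
  by (rule irred_tridiagonalI[OF N upper]) (use sym upper super in auto)

lemma irred_tridiagonal_transpose:
  "irred_tridiagonal (transpose_mat N) \<longleftrightarrow> irred_tridiagonal N"
  unfolding irred_tridiagonal_def tridiagonal_def by (auto simp: add.commute)

lemma mat_diag_symmetrizer_iff:
  fixes N :: "'a::comm_ring_1 mat"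
  assumes N: "N \<in> carrier_mat n n"
  shows "mat_diag n w * N = transpose_mat N * mat_diag n w \<longleftrightarrow>
    (\<forall>i<n. \<forall>j<n. w i * N $$ (i,j) = w j * N $$ (j,i))"
proof -
  have "transpose_mat N * mat_diag n w = mat n n (\<lambda>(i,j). w j * N $$ (j,i))"
    using N by (auto simp: mat_diag_mult_right[of _ n n] mult.commute intro!: eq_matI)
  then show ?thesis using N by (auto simp: mat_diag_mult_left[OF N] mat_eq_iff)
qed

lemma det_congruence:
  assumes "P \<in> carrier_mat n n" "X \<in> carrier_mat n n"
  shows "det (transpose_mat P * X * P) = det P * det X * det P"
  using assms by (simp add: det_mult[of _ n] det_transpose)

lemma symmetrizer_congruence:
  fixes S M P Q :: "'a::field mat"
  assumes S: "S \<in> carrier_mat n n" and M: "M \<in> carrier_mat n n"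
    and P: "P \<in> carrier_mat n n" and Q: "Q \<in> carrier_mat n n"
    and PQ: "P * Q = 1\<^sub>m n" and SM: "S * M = transpose_mat M * S"
  shows "(transpose_mat P * S * P) * (Q * M * P) =
    transpose_mat (Q * M * P) * (transpose_mat P * S * P)"
proof -
  note assoc = assoc_mult_mat[of _ n n _ n _ n]
  have PQX: "P * (Q * X) = X" if "X \<in> carrier_mat n n" for X
    using that P Q PQ by (simp flip: assoc)
  have QtPtX: "transpose_mat Q * (transpose_mat P * X) = X" if "X \<in> carrier_mat n n" for X
    using that P Q PQ by (simp add: transpose_mult[OF P Q, symmetric] flip: assoc)
  have "(transpose_mat P * S * P) * (Q * M * P) = transpose_mat P * ((S * M) * P)"
    using S M P Q by (simp add: assoc PQX)
  also have "\<dots> = transpose_mat P * (transpose_mat M * (S * P))"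
    using S M P by (simp add: SM assoc)
  also have "\<dots> = transpose_mat (Q * M * P) * (transpose_mat P * S * P)"
    using S M P Q by (simp add: transpose_mult[of _ n n _ n] assoc QtPtX)
  finally show ?thesis .
qed

lemma symmetrizer_of_mat_diag_distinct:
  fixes \<Gamma> :: "'a::field mat"
  assumes G: "\<Gamma> \<in> carrier_mat n n"
    and GD: "\<Gamma> * mat_diag n \<theta> = transpose_mat (mat_diag n \<theta>) * \<Gamma>"
    and dist: "\<forall>i<n. \<forall>j<n. i \<noteq> j \<longrightarrow> \<theta> i \<noteq> \<theta> j"
  shows "\<Gamma> = mat_diag n (\<lambda>i. \<Gamma> $$ (i,i))"
proof -
  have "mat n n (\<lambda>(i,j). \<Gamma> $$ (i,j) * \<theta> j) = mat n n (\<lambda>(i,j). \<theta> i * \<Gamma> $$ (i,j))"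
    using GD by (simp add: mat_diag_mult_right[OF G] mat_diag_mult_left[OF G])
  then have eq: "\<Gamma> $$ (i,j) * \<theta> j = \<Gamma> $$ (i,j) * \<theta> i" if "i < n" "j < n" for i j
    using that by (auto simp: mat_eq_iff mult.commute)
  show ?thesis
  proof (rule eq_matI)
    fix i j assume "i < dim_row (mat_diag n (\<lambda>i. \<Gamma> $$ (i,i)))"
      "j < dim_col (mat_diag n (\<lambda>i. \<Gamma> $$ (i,i)))"
    then have ij: "i < n" "j < n" by (simp_all add: mat_diag_def)
    show "\<Gamma> $$ (i,j) = mat_diag n (\<lambda>i. \<Gamma> $$ (i,i)) $$ (i,j)"
    proof (cases "i = j")
      case False
      then have "\<Gamma> $$ (i,j) = 0" using eq[OF ij] dist ij by (metis mult_left_cancel)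
      then show ?thesis using False ij by (simp add: mat_diag_def)
    qed (use ij in \<open>simp add: mat_diag_def\<close>)
  qed (use G in \<open>auto simp: mat_diag_def\<close>)
qed

text \<open>\<Gamma> = P^T S P satisfies \<Gamma> D = D \<Gamma> for the diagonal D = Q A P, hence is diagonal itself.\<close>

lemma diag_symmetrizable_in_eigenbasis:
  fixes S A M P Q :: "'a::field mat"
  assumes S: "S \<in> carrier_mat n n" "det S \<noteq> 0"
    and SA: "S * A = transpose_mat A * S" and SM: "S * M = transpose_mat M * S"
    and A: "A \<in> carrier_mat n n" and M: "M \<in> carrier_mat n n"
    and sim: "similar_mat_wit A (mat_diag n \<theta>) P Q"
    and dist: "\<forall>i<n. \<forall>j<n. i \<noteq> j \<longrightarrow> \<theta> i \<noteq> \<theta> j"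
  shows "diag_symmetrizable (Q * M * P)"
proof -
  note s = similar_mat_witD2[OF A sim]
  define \<Gamma> where "\<Gamma> = transpose_mat P * S * P"
  define \<gamma> where "\<gamma> i = \<Gamma> $$ (i,i)" for i
  have G: "\<Gamma> \<in> carrier_mat n n" using S s unfolding \<Gamma>_def by auto
  have "mat_diag n \<theta> = Q * A * P"
    using similar_mat_witD2[OF mat_diag_dim similar_mat_wit_sym[OF sim]] by simp
  then have "\<Gamma> * mat_diag n \<theta> = transpose_mat (mat_diag n \<theta>) * \<Gamma>"
    using symmetrizer_congruence[OF S(1) s(4,6,7,1) SA] unfolding \<Gamma>_def by simp
  then have G_diag: "\<Gamma> = mat_diag n \<gamma>"
    unfolding \<gamma>_def by (rule symmetrizer_of_mat_diag_distinct[OF G _ dist])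
  have "det \<Gamma> = det P * det S * det P"
    using det_congruence[OF s(6) S(1)] unfolding \<Gamma>_def .
  moreover have "det P \<noteq> 0" using det_nonzero_if_right_inverse[OF s(6,7,1)] .
  ultimately have "det \<Gamma> \<noteq> 0" using S(2) by simp
  then have nz: "\<forall>i<n. \<gamma> i \<noteq> 0" unfolding G_diag det_mat_diag by simp
  have X: "Q * M * P \<in> carrier_mat n n" using s M by auto
  have "mat_diag n \<gamma> * (Q * M * P) = transpose_mat (Q * M * P) * mat_diag n \<gamma>"
    using symmetrizer_congruence[OF S(1) M s(6,7,1) SM] unfolding \<Gamma>_def[symmetric] G_diag .
  then have "\<forall>i<n. \<forall>j<n. \<gamma> i * (Q * M * P) $$ (i,j) = \<gamma> j * (Q * M * P) $$ (j,i)"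
    using mat_diag_symmetrizer_iff[OF X] by blast
  then show ?thesis using nz X s(7) unfolding diag_symmetrizable_def by auto
qed

lemma common_symmetrizer:
  fixes A M B N P Q :: "'a::field mat"
  assumes simA: "similar_mat_wit A B P Q" and simM: "similar_mat_wit M N P Q"
    and A: "A \<in> carrier_mat n n" and M: "M \<in> carrier_mat n n"
    and B: "diagonal_mat B" and N: "irred_tridiagonal N"
  shows "\<exists>S\<in>carrier_mat n n. det S \<noteq> 0 \<and> S * A = transpose_mat A * S \<and> S * M = transpose_mat M * S"
proof -
  note a = similar_mat_witD2[OF A simA] and m = similar_mat_witD2[OF M simM]
  obtain w where w: "\<forall>i<n. w i \<noteq> 0" "\<forall>i<n. \<forall>j<n. w i * N $$ (i,j) = w j * N $$ (j,i)"
    using irred_tridiagonal_diag_symmetrizable[OF m(5) N] m(5) unfolding diag_symmetrizable_def by auto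
  define W where "W = mat_diag n w"
  have WN: "W * N = transpose_mat N * W"
    using mat_diag_symmetrizer_iff[OF m(5)] w(2) unfolding W_def by blast
  have "w i * B $$ (i,j) = w j * B $$ (j,i)" if "i < n" "j < n" for i j
    using B a(5) that by (cases "i = j") (auto simp: diagonal_mat_def)
  then have WB: "W * B = transpose_mat B * W"
    using mat_diag_symmetrizer_iff[OF a(5)] unfolding W_def by blast
  define S where "S = transpose_mat Q * W * Q"
  have "det S = det Q * det W * det Q"
    using det_congruence[OF a(7), of W] unfolding S_def W_def by simp
  moreover have "det Q \<noteq> 0" using det_nonzero_if_right_inverse[OF a(7,6,2)] .
  moreover have "det W \<noteq> 0" using w(1) unfolding W_def by (simp add: det_mat_diag)
  ultimately have "det S \<noteq> 0" by simp
  moreover have "S * A = transpose_mat A * S" "S * M = transpose_mat M * S"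
    using symmetrizer_congruence[of W n _ Q P, OF _ _ a(7,6,2)] WB WN a m
    unfolding S_def W_def by auto
  moreover have "S \<in> carrier_mat n n" using a unfolding S_def W_def by auto
  ultimately show ?thesis by blast
qed

subsection \<open>Anti-triangular change of basis\<close>

text \<open>
  After reversing the order of the basis, L and K become upper triangular, and conjugation by
  triangular matrices preserves the Hessenberg shape, scaling the subdiagonal entries.
\<close>

lemma antitriangular_conj_hessenberg:
  fixes L M K :: "'a::field mat"
  assumes L: "L \<in> carrier_mat (Suc d) (Suc d)" and M: "M \<in> carrier_mat (Suc d) (Suc d)"
    and K: "K \<in> carrier_mat (Suc d) (Suc d)"
    and L0: "\<forall>k\<le>d. \<forall>a\<le>d. d < k + a \<longrightarrow> L $$ (k,a) = 0"
    and K0: "\<forall>m\<le>d. \<forall>j\<le>d. m + j < d \<longrightarrow> K $$ (m,j) = 0"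
    and M0: "\<forall>a\<le>d. \<forall>m\<le>d. a + 1 < m \<longrightarrow> M $$ (a,m) = 0"
  shows "\<And>k j. k \<le> d \<Longrightarrow> j + 1 < k \<Longrightarrow> (L * M * K) $$ (k,j) = 0"
    and "\<And>j. j < d \<Longrightarrow>
      (L * M * K) $$ (j+1,j) = L $$ (j+1,d-j-1) * M $$ (d-j-1,d-j) * K $$ (d-j,j)"
proof -
  have MK: "M * K \<in> carrier_mat (Suc d) (Suc d)" using M K by simp
  have LMK: "L * M * K = L * (M * K)" using L M K by (rule assoc_mult_mat)
  have MK0: "(M * K) $$ (a,j) = 0" if "a \<le> d" "j \<le> d" "a + 1 + j < d" for a j
  proof (rule mult_mat_index_zero[OF M K])
    fix l assume "l < Suc d"
    then show "M $$ (a,l) * K $$ (l,j) = 0"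
      using that M0 K0 by (cases "l + j < d") auto
  qed (use that in auto)
  have MK1: "(M * K) $$ (d-j-1,j) = M $$ (d-j-1,d-j) * K $$ (d-j,j)" if "j < d" for j
    using that M0 K0 by (intro mult_mat_index_single[OF M K]) (auto simp: neq_iff)
  show "(L * M * K) $$ (k,j) = 0" if "k \<le> d" "j + 1 < k" for k j
    unfolding LMK
  proof (rule mult_mat_index_zero[OF L MK])
    fix a assume "a < Suc d"
    then show "L $$ (k,a) * (M * K) $$ (a,j) = 0"
      using that L0 MK0 by (cases "d < k + a") auto
  qed (use that in auto)
  show "(L * M * K) $$ (j+1,j) = L $$ (j+1,d-j-1) * M $$ (d-j-1,d-j) * K $$ (d-j,j)"
    if "j < d" for j
  proof -
    have "(L * (M * K)) $$ (j+1,j) = L $$ (j+1,d-j-1) * (M * K) $$ (d-j-1,j)"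
      using that L0 MK0 by (intro mult_mat_index_single[OF L MK]) (auto simp: neq_iff)
    then show ?thesis unfolding LMK MK1[OF that] by simp
  qed
qed

lemma antitriangular_conj_hessenberg_transpose:
  fixes L M K :: "'a::field mat"
  assumes L: "L \<in> carrier_mat (Suc d) (Suc d)" and M: "M \<in> carrier_mat (Suc d) (Suc d)"
    and K: "K \<in> carrier_mat (Suc d) (Suc d)"
    and L0: "\<forall>k\<le>d. \<forall>a\<le>d. d < k + a \<longrightarrow> L $$ (k,a) = 0"
    and K0: "\<forall>m\<le>d. \<forall>j\<le>d. m + j < d \<longrightarrow> K $$ (m,j) = 0"
    and M0: "\<forall>a\<le>d. \<forall>m\<le>d. m + 1 < a \<longrightarrow> M $$ (a,m) = 0"
  shows "\<And>k i. i \<le> d \<Longrightarrow> k + 1 < i \<Longrightarrow> (K * M * L) $$ (k,i) = 0"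
    and "\<And>i. 0 < i \<Longrightarrow> i \<le> d \<Longrightarrow>
      (K * M * L) $$ (i-1,i) = K $$ (i-1,d-i+1) * M $$ (d-i+1,d-i) * L $$ (d-i,i)"
proof -
  let ?T = "transpose_mat L * transpose_mat M * transpose_mat K"
  have T: "(K * M * L) $$ (k,i) = ?T $$ (i,k)" if "k \<le> d" "i \<le> d" for k i
  proof -
    have "transpose_mat (K * M * L) = transpose_mat L * transpose_mat (K * M)"
      using K M L by (intro transpose_mult) auto
    also have "\<dots> = ?T"
      using K M L by (simp add: transpose_mult[OF K M] assoc_mult_mat[of _ "Suc d" "Suc d"])
    finally have "?T $$ (i,k) = transpose_mat (K * M * L) $$ (i,k)" by simp
    also have "\<dots> = (K * M * L) $$ (k,i)" using that K M L by (intro index_transpose_mat(1)) auto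
    finally show ?thesis by simp
  qed
  note H = antitriangular_conj_hessenberg[of "transpose_mat L" d "transpose_mat M" "transpose_mat K"]
  have hyps: "\<forall>k\<le>d. \<forall>a\<le>d. d < k + a \<longrightarrow> transpose_mat L $$ (k,a) = 0"
    "\<forall>m\<le>d. \<forall>j\<le>d. m + j < d \<longrightarrow> transpose_mat K $$ (m,j) = 0"
    "\<forall>a\<le>d. \<forall>m\<le>d. a + 1 < m \<longrightarrow> transpose_mat M $$ (a,m) = 0"
    using L K M L0 K0 M0 by (simp_all add: add.commute)
  show "(K * M * L) $$ (k,i) = 0" if "i \<le> d" "k + 1 < i" for k i
    using T[of k i] H(1)[OF _ _ _ hyps, of i k] L M K that by simp
  show "(K * M * L) $$ (i-1,i) = K $$ (i-1,d-i+1) * M $$ (d-i+1,d-i) * L $$ (d-i,i)"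
    if "0 < i" "i \<le> d" for i
  proof -
    have "d - (i - 1) - 1 = d - i" "d - (i - 1) = d - i + 1" "i - 1 + 1 = i" using that by auto
    then have "?T $$ (i,i-1) = transpose_mat L $$ (i,d-i) * transpose_mat M $$ (d-i,d-i+1) *
        transpose_mat K $$ (d-i+1,i-1)"
      using H(2)[OF _ _ _ hyps, of "i-1"] L M K that by simp
    also have "\<dots> = K $$ (i-1,d-i+1) * M $$ (d-i+1,d-i) * L $$ (d-i,i)"
      using L M K that by (simp add: mult_ac)
    finally show ?thesis using T[of "i-1" i] that by simp
  qed
qed

lemma antitriangular_inverse_antidiagonal:
  fixes L K :: "'a::field mat"
  assumes L: "L \<in> carrier_mat (Suc d) (Suc d)" and K: "K \<in> carrier_mat (Suc d) (Suc d)"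
    and L0: "\<forall>k\<le>d. \<forall>a\<le>d. d < k + a \<longrightarrow> L $$ (k,a) = 0"
    and K0: "\<forall>m\<le>d. \<forall>j\<le>d. m + j < d \<longrightarrow> K $$ (m,j) = 0"
    and LK: "L * K = 1\<^sub>m (Suc d)" and k: "k \<le> d"
  shows "L $$ (k,d-k) \<noteq> 0" "K $$ (d-k,k) \<noteq> 0"
proof -
  have "(L * K) $$ (k,k) = L $$ (k,d-k) * K $$ (d-k,k)"
    using k L0 K0 by (intro mult_mat_index_single[OF L K]) (auto simp: neq_iff)
  then have "L $$ (k,d-k) * K $$ (d-k,k) = 1" using LK k by simp
  then show "L $$ (k,d-k) \<noteq> 0" "K $$ (d-k,k) \<noteq> 0" by auto
qed

subsection \<open>Split decompositions from columns\<close>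

lemma mult_mat_vec_eq_col_sum:
  fixes G :: "'a::comm_ring_1 mat"
  assumes G: "G \<in> carrier_mat (Suc d) (Suc d)"
  shows "G *\<^sub>v vec (Suc d) c = vec (Suc d) (\<lambda>k. \<Sum>i\<le>d. (c i \<cdot>\<^sub>v col G i) $ k)"
proof (rule eq_vecI)
  fix k assume "k < dim_vec (vec (Suc d) (\<lambda>k. \<Sum>i\<le>d. (c i \<cdot>\<^sub>v col G i) $ k))"
  then have k: "k < Suc d" by simp
  have "(G *\<^sub>v vec (Suc d) c) $ k = (\<Sum>i<Suc d. G $$ (k,i) * c i)"
    using G k by (simp add: scalar_prod_def lessThan_atLeast0)
  also have "\<dots> = (\<Sum>i\<le>d. (c i \<cdot>\<^sub>v col G i) $ k)"
    unfolding lessThan_Suc_atMost using G k by (intro sum.cong) auto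
  finally show "(G *\<^sub>v vec (Suc d) c) $ k = vec (Suc d) (\<lambda>k. \<Sum>i\<le>d. (c i \<cdot>\<^sub>v col G i) $ k) $ k"
    using k by simp
qed (use G in simp)

lemma decomposition_cols:
  fixes G H :: "'a::field mat"
  assumes G: "G \<in> carrier_mat (Suc d) (Suc d)" and H: "H \<in> carrier_mat (Suc d) (Suc d)"
    and GH: "G * H = 1\<^sub>m (Suc d)" and HG: "H * G = 1\<^sub>m (Suc d)"
  shows "decomposition d (\<lambda>i. {c \<cdot>\<^sub>v col G i | c. True})"
  unfolding decomposition_def
proof (intro conjI allI impI ballI)
  fix i assume i: "i \<le> d"
  have "row H i \<bullet> col G i = 1" using arg_cong[OF HG, of "\<lambda>X. X $$ (i,i)"] G H i by simp
  moreover have "row H i \<in> carrier_vec (Suc d)" using H by (simp add: row_def)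
  ultimately have "col G i \<noteq> 0\<^sub>v (Suc d)" by auto
  then show "\<exists>v. v \<in> carrier_vec (Suc d) \<and> v \<noteq> 0\<^sub>v (Suc d) \<and>
      {c \<cdot>\<^sub>v col G i | c. True} = {c \<cdot>\<^sub>v v | c. True}"
    using col_carrier_vec[OF _ G, of i] i by (intro exI[of _ "col G i"]) simp
next
  fix x :: "'a vec" assume x: "x \<in> carrier_vec (Suc d)"
  let ?split = "\<lambda>u. (\<forall>i\<le>d. u i \<in> {c \<cdot>\<^sub>v col G i | c. True}) \<and> (\<forall>i>d. u i = 0\<^sub>v (Suc d)) \<and>
    x = vec (Suc d) (\<lambda>k. \<Sum>i\<le>d. u i $ k)"
  define y where "y = H *\<^sub>v x"
  define u where "u i = (if i \<le> d then (y $ i) \<cdot>\<^sub>v col G i else 0\<^sub>v (Suc d))" for i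
  have "x = (G * H) *\<^sub>v x" using GH x by simp
  also have "\<dots> = G *\<^sub>v vec (Suc d) (\<lambda>i. y $ i)"
    using G H x unfolding y_def by (auto intro!: arg_cong[of _ _ "\<lambda>v. G *\<^sub>v v"])
  finally have "x = vec (Suc d) (\<lambda>k. \<Sum>i\<le>d. u i $ k)"
    unfolding mult_mat_vec_eq_col_sum[OF G] u_def by (auto intro!: eq_vecI sum.cong)
  then have "?split u" unfolding u_def by auto
  moreover have "v = u" if v: "?split v" for v
  proof -
    have "\<forall>i. \<exists>c. i \<le> d \<longrightarrow> v i = c \<cdot>\<^sub>v col G i" using v by blast
    then obtain c where c: "\<forall>i\<le>d. v i = c i \<cdot>\<^sub>v col G i" by metis
    have "x = G *\<^sub>v vec (Suc d) c"
      using v c unfolding mult_mat_vec_eq_col_sum[OF G] by (auto intro!: eq_vecI sum.cong)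
    then have "y = (H * G) *\<^sub>v vec (Suc d) c" unfolding y_def using G H by simp
    then have "\<forall>i\<le>d. y $ i = c i" using HG by auto
    then show "v = u" using c v unfolding u_def by auto
  qed
  ultimately show "\<exists>!u. ?split u" by blast
qed

lemma image_line_mult_mat_vec:
  fixes M :: "'a::field mat"
  assumes M: "M \<in> carrier_mat n n" and g: "g \<in> carrier_vec n"
    and Mg: "M *\<^sub>v g = a \<cdot>\<^sub>v g'" and a: "a \<noteq> 0"
  shows "(\<lambda>v. M *\<^sub>v v) ` {c \<cdot>\<^sub>v g | c. True} = {c \<cdot>\<^sub>v g' | c. True}"
proof (intro equalityI subsetI)
  fix x assume "x \<in> (\<lambda>v. M *\<^sub>v v) ` {c \<cdot>\<^sub>v g | c. True}"
  then obtain c where "x = M *\<^sub>v (c \<cdot>\<^sub>v g)" by auto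
  then have "x = (c * a) \<cdot>\<^sub>v g'" using mult_mat_vec[OF M g] Mg by (simp add: smult_smult_assoc)
  then show "x \<in> {c \<cdot>\<^sub>v g' | c. True}" by auto
next
  fix x assume "x \<in> {c \<cdot>\<^sub>v g' | c. True}"
  then obtain c where x: "x = c \<cdot>\<^sub>v g'" by auto
  have "M *\<^sub>v ((c / a) \<cdot>\<^sub>v g) = x" using mult_mat_vec[OF M g] Mg a x by (simp add: smult_smult_assoc)
  then show "x \<in> (\<lambda>v. M *\<^sub>v v) ` {c \<cdot>\<^sub>v g | c. True}" by force
qed

lemma image_line_mult_mat_vec_zero:
  fixes M :: "'a::field mat"
  assumes M: "M \<in> carrier_mat n n" and g: "g \<in> carrier_vec n" and Mg: "M *\<^sub>v g = 0\<^sub>v n"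
  shows "(\<lambda>v. M *\<^sub>v v) ` {c \<cdot>\<^sub>v g | c. True} = {0\<^sub>v n}"
proof -
  have Mg0: "M *\<^sub>v (c \<cdot>\<^sub>v g) = 0\<^sub>v n" for c using mult_mat_vec[OF M g] Mg by (auto intro!: eq_vecI)
  then have "0\<^sub>v n \<in> (\<lambda>v. M *\<^sub>v v) ` {c \<cdot>\<^sub>v g | c. True}" by (intro image_eqI[where x = "0 \<cdot>\<^sub>v g"]) auto
  then show ?thesis using Mg0 by auto
qed

lemma mult_minus_smult_one_col_index:
  fixes A G :: "'a::field mat"
  assumes A: "A \<in> carrier_mat n n" and G: "G \<in> carrier_mat n n" and i: "i < n" and m: "m < n"
  shows "((A - c \<cdot>\<^sub>m 1\<^sub>m n) *\<^sub>v col G i) $ m = (A * G) $$ (m,i) - c * G $$ (m,i)"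
proof -
  have "(A - c \<cdot>\<^sub>m 1\<^sub>m n) *\<^sub>v col G i = col ((A - c \<cdot>\<^sub>m 1\<^sub>m n) * G) i"
    by (rule col_mult2[symmetric]) (use A G i in auto)
  moreover have "(A - c \<cdot>\<^sub>m 1\<^sub>m n) * G = A * G - c \<cdot>\<^sub>m G"
    using A G by (simp add: minus_mult_distrib_mat[of _ n n] mult_smult_assoc_mat[of _ n n])
  ultimately show ?thesis using A G i m by simp
qed

lemma col_lower_bidiag_shift:
  fixes A G :: "'a::field mat"
  assumes A: "A \<in> carrier_mat (Suc d) (Suc d)" and G: "G \<in> carrier_mat (Suc d) (Suc d)"
    and AG: "A * G = G * lower_bidiag d \<eta>" and i: "i \<le> d"
  shows "(A - \<eta> i \<cdot>\<^sub>m 1\<^sub>m (Suc d)) *\<^sub>v col G i = (if i < d then col G (i+1) else 0\<^sub>v (Suc d))"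
proof (rule eq_vecI)
  fix m assume "m < dim_vec (if i < d then col G (i+1) else 0\<^sub>v (Suc d))"
  then have m: "m < Suc d" using G by (simp split: if_splits)
  show "((A - \<eta> i \<cdot>\<^sub>m 1\<^sub>m (Suc d)) *\<^sub>v col G i) $ m = (if i < d then col G (i+1) else 0\<^sub>v (Suc d)) $ m"
    using mult_minus_smult_one_col_index[OF A G _ m] mult_lower_bidiag_index[OF G m i] i m G
    unfolding AG by auto
qed (use A G in simp)

lemma col_upper_bidiag_shift:
  fixes As G :: "'a::field mat"
  assumes As: "As \<in> carrier_mat (Suc d) (Suc d)" and G: "G \<in> carrier_mat (Suc d) (Suc d)"
    and AsG: "As * G = G * upper_bidiag d \<eta>s \<phi>" and i: "i \<le> d"
  shows "(As - \<eta>s i \<cdot>\<^sub>m 1\<^sub>m (Suc d)) *\<^sub>v col G i =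
    (if 0 < i then \<phi> i \<cdot>\<^sub>v col G (i-1) else 0\<^sub>v (Suc d))"
proof (rule eq_vecI)
  fix m assume "m < dim_vec (if 0 < i then \<phi> i \<cdot>\<^sub>v col G (i-1) else 0\<^sub>v (Suc d))"
  then have m: "m < Suc d" using G by (simp split: if_splits)
  show "((As - \<eta>s i \<cdot>\<^sub>m 1\<^sub>m (Suc d)) *\<^sub>v col G i) $ m =
      (if 0 < i then \<phi> i \<cdot>\<^sub>v col G (i-1) else 0\<^sub>v (Suc d)) $ m"
    using mult_minus_smult_one_col_index[OF As G _ m] mult_upper_bidiag_index[OF G m i] i m G
    unfolding AsG by (cases "0 < i") (simp_all add: mult.commute)
qed (use As G in simp)

lemma split_decomposition_of_bidiagonal_similarity:
  fixes A As G H :: "'a::field mat"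
  assumes simA: "similar_mat_wit A (lower_bidiag d \<eta>) G H"
    and simAs: "similar_mat_wit As (upper_bidiag d \<eta>s \<phi>) G H"
    and \<phi>: "\<forall>i\<in>{1..d}. \<phi> i \<noteq> 0"
  shows "split_decomposition d A As \<eta> \<eta>s (\<lambda>i. {c \<cdot>\<^sub>v col G i | c. True})"
proof -
  have A: "A \<in> carrier_mat (Suc d) (Suc d)"
    using similar_mat_wit_carrier[OF simA lower_bidiag_carrier] .
  have As: "As \<in> carrier_mat (Suc d) (Suc d)"
    using similar_mat_wit_carrier[OF simAs upper_bidiag_carrier] .
  note G = similar_mat_witD2[OF A simA]
  have g: "col G i \<in> carrier_vec (Suc d)" if "i \<le> d" for i
    using col_carrier_vec[OF _ G(6), of i] that by simp
  have AI: "A - c \<cdot>\<^sub>m 1\<^sub>m (Suc d) \<in> carrier_mat (Suc d) (Suc d)"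
    and AsI: "As - c \<cdot>\<^sub>m 1\<^sub>m (Suc d) \<in> carrier_mat (Suc d) (Suc d)" for c
    using A As by auto
  note shA = col_lower_bidiag_shift[OF A G(6) similar_mat_wit_mult_eqs(1)[OF simA A]]
  note shAs = col_upper_bidiag_shift[OF As G(6) similar_mat_wit_mult_eqs(1)[OF simAs As]]
  show ?thesis
    unfolding split_decomposition_def
  proof (intro conjI ballI allI impI)
    show "decomposition d (\<lambda>i. {c \<cdot>\<^sub>v col G i | c. True})"
      by (rule decomposition_cols[OF G(6,7,1,2)])
    show "(\<lambda>v. (A - \<eta> i \<cdot>\<^sub>m 1\<^sub>m (Suc d)) *\<^sub>v v) ` {c \<cdot>\<^sub>v col G i | c. True} =
        {c \<cdot>\<^sub>v col G (i+1) | c. True}" if "i < d" for i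
    proof -
      have "(A - \<eta> i \<cdot>\<^sub>m 1\<^sub>m (Suc d)) *\<^sub>v col G i = 1 \<cdot>\<^sub>v col G (i+1)"
        using shA[of i] that g[of "i+1"] by simp
      from image_line_mult_mat_vec[OF AI g[of i] this one_neq_zero] that show ?thesis by simp
    qed
    show "(\<lambda>v. (A - \<eta> d \<cdot>\<^sub>m 1\<^sub>m (Suc d)) *\<^sub>v v) ` {c \<cdot>\<^sub>v col G d | c. True} = {0\<^sub>v (Suc d)}"
      using image_line_mult_mat_vec_zero[OF AI g[of d]] shA[of d] by simp
    show "(\<lambda>v. (As - \<eta>s i \<cdot>\<^sub>m 1\<^sub>m (Suc d)) *\<^sub>v v) ` {c \<cdot>\<^sub>v col G i | c. True} =
        {c \<cdot>\<^sub>v col G (i-1) | c. True}" if "i \<in> {1..d}" for i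
      using image_line_mult_mat_vec[OF AsI g[of i]] shAs[of i] that \<phi> by simp
    show "(\<lambda>v. (As - \<eta>s 0 \<cdot>\<^sub>m 1\<^sub>m (Suc d)) *\<^sub>v v) ` {c \<cdot>\<^sub>v col G 0 | c. True} = {0\<^sub>v (Suc d)}"
      using image_line_mult_mat_vec_zero[OF AsI g[of 0]] shAs[of 0] by simp
  qed
qed

lemma split_sequence_of_bidiagonal_similarity:
  fixes A As G H :: "'a::field mat"
  assumes simA: "similar_mat_wit A (lower_bidiag d \<eta>) G H"
    and simAs: "similar_mat_wit As (upper_bidiag d \<eta>s \<phi>) G H"
    and \<phi>: "\<forall>i\<in>{1..d}. \<phi> i \<noteq> 0"
  shows "split_sequence d A As \<eta> \<eta>s \<phi>"
proof -
  have A: "A \<in> carrier_mat (Suc d) (Suc d)"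
    using similar_mat_wit_carrier[OF simA lower_bidiag_carrier] .
  have As: "As \<in> carrier_mat (Suc d) (Suc d)"
    using similar_mat_wit_carrier[OF simAs upper_bidiag_carrier] .
  note G = similar_mat_witD2[OF A simA]
  have g: "col G i \<in> carrier_vec (Suc d)" if "i \<le> d" for i
    using col_carrier_vec[OF _ G(6), of i] that by simp
  have AI: "A - c \<cdot>\<^sub>m 1\<^sub>m (Suc d) \<in> carrier_mat (Suc d) (Suc d)"
    and AsI: "As - c \<cdot>\<^sub>m 1\<^sub>m (Suc d) \<in> carrier_mat (Suc d) (Suc d)" for c
    using A As by auto
  have "((A - \<eta> (i-1) \<cdot>\<^sub>m 1\<^sub>m (Suc d)) * (As - \<eta>s i \<cdot>\<^sub>m 1\<^sub>m (Suc d))) *\<^sub>v v = \<phi> i \<cdot>\<^sub>v v"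
    if i: "i \<in> {1..d}" and v: "v \<in> {c \<cdot>\<^sub>v col G i | c. True}" for i v
  proof -
    obtain c where vc: "v = c \<cdot>\<^sub>v col G i" using v by auto
    have i1: "i - 1 \<le> d" using i by auto
    have "(As - \<eta>s i \<cdot>\<^sub>m 1\<^sub>m (Suc d)) *\<^sub>v v = (c * \<phi> i) \<cdot>\<^sub>v col G (i-1)"
      using vc col_upper_bidiag_shift[OF As G(6) similar_mat_wit_mult_eqs(1)[OF simAs As], of i] i
        mult_mat_vec[OF AsI g[of i]]
      by (simp add: smult_smult_assoc)
    moreover have "(A - \<eta> (i-1) \<cdot>\<^sub>m 1\<^sub>m (Suc d)) *\<^sub>v col G (i-1) = col G i"
      using col_lower_bidiag_shift[OF A G(6) similar_mat_wit_mult_eqs(1)[OF simA A], of "i-1"] i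
      by auto
    ultimately show ?thesis
      using vc i g[of i] AI AsI mult_mat_vec[OF AI g[OF i1]]
      by (simp add: assoc_mult_mat_vec[of _ "Suc d" "Suc d" _ "Suc d"] smult_smult_assoc mult.commute)
  qed
  then show ?thesis
    using split_decomposition_of_bidiagonal_similarity[OF simA simAs \<phi>]
    unfolding split_sequence_def by blast
qed

locale bidiagonal_pair =
  fixes d :: nat and th ths ph :: "nat \<Rightarrow> 'a::field"
  assumes th_distinct: "\<forall>i \<le> d. \<forall>j \<le> d. i \<noteq> j \<longrightarrow> th i \<noteq> th j"
    and ths_distinct: "\<forall>i \<le> d. \<forall>j \<le> d. i \<noteq> j \<longrightarrow> ths i \<noteq> ths j"
    and ph_nonzero: "\<forall>i \<in> {1..d}. ph i \<noteq> 0"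
begin

abbreviation A :: "'a mat" where "A \<equiv> lower_bidiag d th"
abbreviation As :: "'a mat" where "As \<equiv> upper_bidiag d ths ph"
abbreviation A_rev :: "'a mat" where "A_rev \<equiv> lower_bidiag d (\<lambda>i. th (d - i))"

text \<open>
  Column j of eigvecs is the \<theta>_j-eigenvector v of A with v_j = 1: the equation
  (A v)_k = \<theta>_k v_k + v_(k-1) forces v_k = v_(k-1) / (\<theta>_j - \<theta>_k). Likewise for eigvecs_s and A*.
\<close>

definition eigvecs :: "'a mat" where
  "eigvecs = mat (Suc d) (Suc d)
     (\<lambda>(k,j). if j \<le> k then \<Prod>m\<in>{Suc j..k}. 1 / (th j - th m) else 0)"

definition eigvecs_s :: "'a mat" where
  "eigvecs_s = mat (Suc d) (Suc d)
     (\<lambda>(k,j). if k \<le> j then \<Prod>m\<in>{k..<j}. ph (m+1) / (ths j - ths m) else 0)"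

lemma eigvecs_carrier [simp]: "eigvecs \<in> carrier_mat (Suc d) (Suc d)"
  and eigvecs_s_carrier [simp]: "eigvecs_s \<in> carrier_mat (Suc d) (Suc d)"
  by (simp_all add: eigvecs_def eigvecs_s_def)

lemma eigvecs_dim [simp]: "dim_row eigvecs = Suc d" "dim_col eigvecs = Suc d"
  and eigvecs_s_dim [simp]: "dim_row eigvecs_s = Suc d" "dim_col eigvecs_s = Suc d"
  by (simp_all add: eigvecs_def eigvecs_s_def)

lemma eigvecs_lower_unitriangular:
  "k \<le> d \<Longrightarrow> j \<le> d \<Longrightarrow> k < j \<Longrightarrow> eigvecs $$ (k,j) = 0" "j \<le> d \<Longrightarrow> eigvecs $$ (j,j) = 1"
  by (auto simp: eigvecs_def)

lemma eigvecs_s_upper_unitriangular: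
  "k \<le> d \<Longrightarrow> j \<le> d \<Longrightarrow> j < k \<Longrightarrow> eigvecs_s $$ (k,j) = 0" "j \<le> d \<Longrightarrow> eigvecs_s $$ (j,j) = 1"
  by (auto simp: eigvecs_s_def)

lemma A_eigvecs: "A * eigvecs = eigvecs * mat_diag (Suc d) th"
proof (rule eq_matI)
  fix k j assume "k < dim_row (eigvecs * mat_diag (Suc d) th)"
    "j < dim_col (eigvecs * mat_diag (Suc d) th)"
  then have k: "k \<le> d" and j: "j \<le> d" by (auto simp: eigvecs_def mat_diag_def)
  have R: "(eigvecs * mat_diag (Suc d) th) $$ (k,j) = eigvecs $$ (k,j) * th j"
    using k j by (simp add: mat_diag_mult_right[OF eigvecs_carrier])
  have L: "(A * eigvecs) $$ (k,j) = th k * eigvecs $$ (k,j) + (if 0 < k then eigvecs $$ (k-1,j) else 0)"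
    using lower_bidiag_mult_index[OF eigvecs_carrier k, of j] j by simp
  consider "k < j" | "k = j" | "j < k" by linarith
  then show "(A * eigvecs) $$ (k,j) = (eigvecs * mat_diag (Suc d) th) $$ (k,j)"
  proof cases
    case 3
    then obtain k' where k': "k = Suc k'" and jk: "j \<le> k'" by (cases k) auto
    define p where "p = (\<Prod>m\<in>{Suc j..k'}. 1 / (th j - th m))"
    have "eigvecs $$ (k-1,j) = p" using k' jk k by (simp add: eigvecs_def p_def)
    moreover have "eigvecs $$ (k,j) = 1 / (th j - th k) * p"
      using k' jk k j by (simp add: eigvecs_def p_def prod.nat_ivl_Suc')
    moreover have "th j \<noteq> th k" using th_distinct 3 k j by auto
    ultimately show ?thesis unfolding L R using 3 by (auto simp: field_simps)
  qed (use k j in \<open>unfold L R, auto simp: eigvecs_def\<close>)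
qed (auto simp: eigvecs_def mat_diag_def)

lemma As_eigvecs_s: "As * eigvecs_s = eigvecs_s * mat_diag (Suc d) ths"
proof (rule eq_matI)
  fix k j assume "k < dim_row (eigvecs_s * mat_diag (Suc d) ths)"
    "j < dim_col (eigvecs_s * mat_diag (Suc d) ths)"
  then have k: "k \<le> d" and j: "j \<le> d" by (auto simp: eigvecs_s_def mat_diag_def)
  have R: "(eigvecs_s * mat_diag (Suc d) ths) $$ (k,j) = eigvecs_s $$ (k,j) * ths j"
    using k j by (simp add: mat_diag_mult_right[OF eigvecs_s_carrier])
  have L: "(As * eigvecs_s) $$ (k,j) =
      ths k * eigvecs_s $$ (k,j) + (if k < d then ph (k+1) * eigvecs_s $$ (k+1,j) else 0)"
    using upper_bidiag_mult_index[OF eigvecs_s_carrier k, of j] j by simp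
  consider "j < k" | "k = j" | "k < j" by linarith
  then show "(As * eigvecs_s) $$ (k,j) = (eigvecs_s * mat_diag (Suc d) ths) $$ (k,j)"
  proof cases
    case 3
    define p where "p = (\<Prod>m\<in>{Suc k..<j}. ph (m+1) / (ths j - ths m))"
    have "eigvecs_s $$ (k+1,j) = p" using 3 k j by (simp add: eigvecs_s_def p_def)
    moreover have "eigvecs_s $$ (k,j) = ph (k+1) / (ths j - ths k) * p"
      using 3 k j by (simp add: eigvecs_s_def p_def prod.atLeast_Suc_lessThan)
    moreover have "ths j \<noteq> ths k" using ths_distinct 3 k j by auto
    ultimately show ?thesis unfolding L R using 3 j by (auto simp: field_simps)
  qed (use k j in \<open>unfold L R, auto simp: eigvecs_s_def\<close>)
qed (auto simp: eigvecs_s_def mat_diag_def)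

lemma det_eigvecs: "det eigvecs = 1"
  by (rule det_lower_unitriangular[OF eigvecs_carrier]) (auto simp: eigvecs_lower_unitriangular)

lemma det_eigvecs_s: "det eigvecs_s = 1"
  by (rule det_upper_unitriangular[OF eigvecs_s_carrier]) (auto simp: eigvecs_s_upper_unitriangular)

lemma inverse_eigvecs:
  "inverse_mat eigvecs \<in> carrier_mat (Suc d) (Suc d)"
  "eigvecs * inverse_mat eigvecs = 1\<^sub>m (Suc d)" "inverse_mat eigvecs * eigvecs = 1\<^sub>m (Suc d)"
  using inverse_mat[OF eigvecs_carrier] det_eigvecs by auto

lemma inverse_eigvecs_s:
  "inverse_mat eigvecs_s \<in> carrier_mat (Suc d) (Suc d)"
  "eigvecs_s * inverse_mat eigvecs_s = 1\<^sub>m (Suc d)" "inverse_mat eigvecs_s * eigvecs_s = 1\<^sub>m (Suc d)"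
  using inverse_mat[OF eigvecs_s_carrier] det_eigvecs_s by auto

lemma similar_A_diag: "similar_mat_wit A (mat_diag (Suc d) th) eigvecs (inverse_mat eigvecs)"
  by (rule similar_mat_wit_inverse_mat[OF lower_bidiag_carrier mat_diag_dim eigvecs_carrier _
        A_eigvecs]) (simp add: det_eigvecs)

lemma similar_As_diag: "similar_mat_wit As (mat_diag (Suc d) ths) eigvecs_s (inverse_mat eigvecs_s)"
  by (rule similar_mat_wit_inverse_mat[OF upper_bidiag_carrier mat_diag_dim eigvecs_s_carrier _
        As_eigvecs_s]) (simp add: det_eigvecs_s)

definition Bs :: "'a mat" where "Bs = inverse_mat eigvecs * As * eigvecs"
definition B :: "'a mat" where "B = inverse_mat eigvecs_s * A * eigvecs_s"

lemma Bs_carrier [simp]: "Bs \<in> carrier_mat (Suc d) (Suc d)"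
  and B_carrier [simp]: "B \<in> carrier_mat (Suc d) (Suc d)"
  using inverse_eigvecs(1) inverse_eigvecs_s(1) unfolding Bs_def B_def
  by (auto intro!: mult_carrier_mat[of _ "Suc d" "Suc d"])

lemma Bs_dim [simp]: "dim_row Bs = Suc d" "dim_col Bs = Suc d"
  and B_dim [simp]: "dim_row B = Suc d" "dim_col B = Suc d"
  using carrier_matD[OF Bs_carrier] carrier_matD[OF B_carrier] by simp_all

lemma similar_As_Bs: "similar_mat_wit As Bs eigvecs (inverse_mat eigvecs)"
  unfolding Bs_def by (rule similar_mat_wit_conj[OF upper_bidiag_carrier]) (use inverse_eigvecs in auto)

lemma similar_A_B: "similar_mat_wit A B eigvecs_s (inverse_mat eigvecs_s)"
  unfolding B_def by (rule similar_mat_wit_conj[OF lower_bidiag_carrier]) (use inverse_eigvecs_s in auto)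

lemma Bs_upper:
  assumes j: "j \<le> d"
  shows "\<And>k. k + 1 < j \<Longrightarrow> Bs $$ (k,j) = 0" and "0 < j \<Longrightarrow> Bs $$ (j-1,j) = ph j"
proof -
  have PB: "eigvecs * Bs = As * eigvecs"
    using similar_mat_wit_mult_eqs(1)[OF similar_As_Bs upper_bidiag_carrier] by simp
  have y: "(As * eigvecs) $$ (k,j) =
      ths k * eigvecs $$ (k,j) + (if k < d then ph (k+1) * eigvecs $$ (k+1,j) else 0)"
    if "k \<le> d" for k using upper_bidiag_mult_index[OF eigvecs_carrier that, of j] j by simp
  have "\<forall>k<j-1. (eigvecs * Bs) $$ (k,j) = 0"
    unfolding PB using y j by (auto simp: eigvecs_lower_unitriangular)
  note r = lower_triangular_mult_col_zeros[OF eigvecs_carrier Bs_carrier _ _ _ this]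
  show "Bs $$ (k,j) = 0" if "k + 1 < j" for k
    using r(1) j that by (auto simp: eigvecs_lower_unitriangular)
  show "Bs $$ (j-1,j) = ph j" if "0 < j"
    using r(2) y[of "j-1"] j that by (auto simp: eigvecs_lower_unitriangular PB)
qed

lemma Bs_superdiag_nonzero: "\<forall>i. i + 1 < Suc d \<longrightarrow> Bs $$ (i,i+1) \<noteq> 0"
proof (intro allI impI)
  fix i assume "i + 1 < Suc d"
  then show "Bs $$ (i,i+1) \<noteq> 0" using Bs_upper(2)[of "i+1"] ph_nonzero by simp
qed

lemma B_lower:
  assumes j: "j \<le> d"
  shows "\<And>k. k \<le> d \<Longrightarrow> j + 1 < k \<Longrightarrow> B $$ (k,j) = 0" and "j < d \<Longrightarrow> B $$ (j+1,j) = 1"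
proof -
  have PB: "eigvecs_s * B = A * eigvecs_s"
    using similar_mat_wit_mult_eqs(1)[OF similar_A_B lower_bidiag_carrier] by simp
  have y: "(A * eigvecs_s) $$ (k,j) =
      th k * eigvecs_s $$ (k,j) + (if 0 < k then eigvecs_s $$ (k-1,j) else 0)"
    if "k \<le> d" for k using lower_bidiag_mult_index[OF eigvecs_s_carrier that, of j] j by simp
  have "\<forall>k<Suc d. j + 1 < k \<longrightarrow> (eigvecs_s * B) $$ (k,j) = 0"
    unfolding PB using y j by (auto simp: eigvecs_s_upper_unitriangular)
  note r = upper_triangular_mult_col_zeros[OF eigvecs_s_carrier B_carrier _ _ _ this]
  show "B $$ (k,j) = 0" if "k \<le> d" "j + 1 < k" for k
    using r(1) j that by (auto simp: eigvecs_s_upper_unitriangular)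
  show "B $$ (j+1,j) = 1" if "j < d"
    using r(2) y[of "j+1"] j that by (auto simp: eigvecs_s_upper_unitriangular PB)
qed

lemma irred_tridiagonal_Bs_if_symmetrizer:
  assumes S: "S \<in> carrier_mat (Suc d) (Suc d)" "det S \<noteq> 0"
    "S * A = transpose_mat A * S" "S * As = transpose_mat As * S"
  shows "irred_tridiagonal Bs"
proof -
  have sym: "diag_symmetrizable Bs" unfolding Bs_def
    using th_distinct by (intro diag_symmetrizable_in_eigenbasis[OF S lower_bidiag_carrier
          upper_bidiag_carrier similar_A_diag]) auto
  then have "\<forall>i<Suc d. \<forall>j<Suc d. Bs $$ (i,j) = 0 \<longleftrightarrow> Bs $$ (j,i) = 0"
    using diag_symmetrizable_zero_iff[OF sym] by (metis Bs_dim(1))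
  moreover have "\<forall>i<Suc d. \<forall>j<Suc d. i + 1 < j \<longrightarrow> Bs $$ (i,j) = 0"
    using Bs_upper(1) by simp
  ultimately show ?thesis
    by (rule irred_tridiagonal_if_symmetric_zeros[OF Bs_carrier _ _ Bs_superdiag_nonzero])
qed

lemma irred_tridiagonal_B_if_symmetrizer:
  assumes S: "S \<in> carrier_mat (Suc d) (Suc d)" "det S \<noteq> 0"
    "S * A = transpose_mat A * S" "S * As = transpose_mat As * S"
  shows "irred_tridiagonal B"
proof -
  have sym: "diag_symmetrizable B" unfolding B_def
    using ths_distinct by (intro diag_symmetrizable_in_eigenbasis[OF S(1,2,4,3) upper_bidiag_carrier
          lower_bidiag_carrier similar_As_diag]) auto
  then have "\<forall>i<Suc d. \<forall>j<Suc d. transpose_mat B $$ (i,j) = 0 \<longleftrightarrow> transpose_mat B $$ (j,i) = 0"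
    using diag_symmetrizable_zero_iff[OF sym] by simp
  moreover have "\<forall>i<Suc d. \<forall>j<Suc d. i + 1 < j \<longrightarrow> transpose_mat B $$ (i,j) = 0"
    using B_lower(1) by simp
  moreover have "\<forall>i. i + 1 < Suc d \<longrightarrow> transpose_mat B $$ (i,i+1) \<noteq> 0"
    using B_lower(2) by simp
  ultimately have "irred_tridiagonal (transpose_mat B)"
    by (intro irred_tridiagonal_if_symmetric_zeros[of _ "Suc d"]) auto
  then show ?thesis by (simp add: irred_tridiagonal_transpose)
qed

lemma leonard_pair_iff_irred_tridiagonal_Bs: "leonard_pair A As \<longleftrightarrow> irred_tridiagonal Bs"
proof
  assume "leonard_pair A As"
  then obtain B' Bs' P Q where "similar_mat_wit A B' P Q" "similar_mat_wit As Bs' P Q"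
    "diagonal_mat B'" "irred_tridiagonal Bs'"
    unfolding leonard_pair_def by blast
  from common_symmetrizer[OF this(1,2) lower_bidiag_carrier upper_bidiag_carrier this(3,4)]
  show "irred_tridiagonal Bs" using irred_tridiagonal_Bs_if_symmetrizer by blast
next
  assume Bs: "irred_tridiagonal Bs"
  from common_symmetrizer[OF similar_A_diag similar_As_Bs lower_bidiag_carrier
      upper_bidiag_carrier diagonal_mat_diag Bs]
  have "irred_tridiagonal B" using irred_tridiagonal_B_if_symmetrizer by blast
  then show "leonard_pair A As"
    unfolding leonard_pair_def
    using similar_A_B similar_As_diag similar_A_diag similar_As_Bs Bs diagonal_mat_diag
    by (meson exI)
qed

context
  fixes G H :: "'a mat"
  assumes similar_G: "similar_mat_wit A A_rev G H"
begin

lemma G_H_inverse: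
  "G \<in> carrier_mat (Suc d) (Suc d)" "H \<in> carrier_mat (Suc d) (Suc d)"
  "G * H = 1\<^sub>m (Suc d)" "H * G = 1\<^sub>m (Suc d)"
  using similar_mat_witD2[OF lower_bidiag_carrier similar_G] by auto

lemma eigvecs_in_G_coords_zeros:
  assumes mj: "m + j < d" and j: "j \<le> d"
  shows "(H * eigvecs) $$ (m,j) = 0"
proof -
  define K where "K = H * eigvecs"
  have K: "K \<in> carrier_mat (Suc d) (Suc d)" using G_H_inverse unfolding K_def by auto
  have KD: "A_rev * K = K * mat_diag (Suc d) th"
    unfolding K_def by (rule intertwine_mult[OF _ lower_bidiag_carrier lower_bidiag_carrier
          eigvecs_carrier mat_diag_dim similar_mat_wit_mult_eqs(2)[OF similar_G lower_bidiag_carrier]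
          A_eigvecs]) (use G_H_inverse in auto)
  have "\<forall>m\<le>d. th (d - m) * K $$ (m,j) + (if 0 < m then K $$ (m-1,j) else 0) = th j * K $$ (m,j)"
  proof (intro allI impI)
    fix m assume m: "m \<le> d"
    have "th (d - m) * K $$ (m,j) + (if 0 < m then K $$ (m-1,j) else 0) = (A_rev * K) $$ (m,j)"
      using lower_bidiag_mult_index[OF K m, of j] j by simp
    also have "\<dots> = (K * mat_diag (Suc d) th) $$ (m,j)" by (simp only: KD)
    also have "\<dots> = th j * K $$ (m,j)"
      using m j by (simp add: mat_diag_mult_right[OF K] mult.commute)
    finally show "th (d - m) * K $$ (m,j) + (if 0 < m then K $$ (m-1,j) else 0) = th j * K $$ (m,j)" .
  qed
  moreover have "\<forall>m<d-j. th (d - m) \<noteq> th j" using th_distinct j by auto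
  ultimately have "\<forall>m<d-j. K $$ (m,j) = 0"
    by (intro lower_bidiag_eigvec_zeros[where f = "\<lambda>m. th (d - m)"]) auto
  then show ?thesis using mj unfolding K_def by simp
qed

lemma G_in_eigvecs_coords_zeros:
  assumes ai: "d < a + i" and a: "a \<le> d" and i: "i \<le> d"
  shows "(inverse_mat eigvecs * G) $$ (a,i) = 0"
proof -
  define L where "L = inverse_mat eigvecs * G"
  have L: "L \<in> carrier_mat (Suc d) (Suc d)" using G_H_inverse inverse_eigvecs unfolding L_def by auto
  have DL: "mat_diag (Suc d) th * L = L * A_rev"
    unfolding L_def by (rule intertwine_mult[OF inverse_eigvecs(1) lower_bidiag_carrier mat_diag_dim
          _ lower_bidiag_carrier similar_mat_wit_mult_eqs(2)[OF similar_A_diag lower_bidiag_carrier]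
          similar_mat_wit_mult_eqs(1)[OF similar_G lower_bidiag_carrier]]) (use G_H_inverse in auto)
  have "\<forall>i\<le>d. L $$ (a,i) * th (d - i) + (if i < d then L $$ (a,i+1) else 0) = th a * L $$ (a,i)"
  proof (intro allI impI)
    fix i assume i: "i \<le> d"
    have "L $$ (a,i) * th (d - i) + (if i < d then L $$ (a,i+1) else 0) = (L * A_rev) $$ (a,i)"
      using mult_lower_bidiag_index[OF L _ i, of a] a by simp
    also have "\<dots> = (mat_diag (Suc d) th * L) $$ (a,i)" by (simp only: DL)
    also have "\<dots> = th a * L $$ (a,i)" using a i by (simp add: mat_diag_mult_left[OF L])
    finally show "L $$ (a,i) * th (d - i) + (if i < d then L $$ (a,i+1) else 0) = th a * L $$ (a,i)" .
  qed
  moreover have "\<forall>i. d - a < i \<longrightarrow> i \<le> d \<longrightarrow> th (d - i) \<noteq> th a" using th_distinct a by auto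
  ultimately have "\<forall>i. d - a < i \<longrightarrow> i \<le> d \<longrightarrow> L $$ (a,i) = 0"
    by (rule lower_bidiag_left_eigvec_zeros[where f = "\<lambda>i. th (d - i)"])
  moreover have "d - a < i" using ai a by arith
  ultimately have "L $$ (a,i) = 0" using i by blast
  then show ?thesis unfolding L_def .
qed

lemma eigvecs_coords_inverse: "(inverse_mat eigvecs * G) * (H * eigvecs) = 1\<^sub>m (Suc d)"
proof -
  have "(inverse_mat eigvecs * G) * (H * eigvecs) = inverse_mat eigvecs * ((G * H) * eigvecs)"
    using G_H_inverse(1,2) inverse_eigvecs(1)
    by (simp add: assoc_mult_mat[of _ "Suc d" "Suc d" _ "Suc d" _ "Suc d"])
  then show ?thesis using G_H_inverse(3) inverse_eigvecs by simp
qed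

lemma Bs_eq_conj: "Bs = (inverse_mat eigvecs * G) * (H * As * G) * (H * eigvecs)"
proof -
  have GH: "G * (H * X) = X" if "X \<in> carrier_mat (Suc d) (Suc d)" for X
    using that G_H_inverse by (simp flip: assoc_mult_mat[of G "Suc d" "Suc d" H "Suc d" X "Suc d"])
  show ?thesis
    unfolding Bs_def using G_H_inverse(1,2) inverse_eigvecs(1)
    by (simp add: assoc_mult_mat[of _ "Suc d" "Suc d" _ "Suc d" _ "Suc d"]
        mult_carrier_mat[of _ "Suc d" "Suc d"] GH)
qed

lemma As_in_G_eq_conj: "H * As * G = (H * eigvecs) * Bs * (inverse_mat eigvecs * G)"
proof -
  have PQ: "eigvecs * (inverse_mat eigvecs * X) = X" if "X \<in> carrier_mat (Suc d) (Suc d)" for X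
    using that inverse_eigvecs
    by (simp flip: assoc_mult_mat[of eigvecs "Suc d" "Suc d" "inverse_mat eigvecs" "Suc d" X "Suc d"])
  show ?thesis
    unfolding Bs_def using G_H_inverse(1,2) inverse_eigvecs(1)
    by (simp add: assoc_mult_mat[of _ "Suc d" "Suc d" _ "Suc d" _ "Suc d"]
        mult_carrier_mat[of _ "Suc d" "Suc d"] PQ)
qed

lemma change_of_basis_antitriangular:
  "\<forall>k\<le>d. \<forall>a\<le>d. d < k + a \<longrightarrow> (inverse_mat eigvecs * G) $$ (k,a) = 0"
  "\<forall>m\<le>d. \<forall>j\<le>d. m + j < d \<longrightarrow> (H * eigvecs) $$ (m,j) = 0"
  "k \<le> d \<Longrightarrow> (inverse_mat eigvecs * G) $$ (k,d-k) \<noteq> 0"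
  "k \<le> d \<Longrightarrow> (H * eigvecs) $$ (d-k,k) \<noteq> 0"
proof -
  show L0: "\<forall>k\<le>d. \<forall>a\<le>d. d < k + a \<longrightarrow> (inverse_mat eigvecs * G) $$ (k,a) = 0"
    using G_in_eigvecs_coords_zeros by auto
  show K0: "\<forall>m\<le>d. \<forall>j\<le>d. m + j < d \<longrightarrow> (H * eigvecs) $$ (m,j) = 0"
    using eigvecs_in_G_coords_zeros by auto
  have "inverse_mat eigvecs * G \<in> carrier_mat (Suc d) (Suc d)" "H * eigvecs \<in> carrier_mat (Suc d) (Suc d)"
    using G_H_inverse inverse_eigvecs by auto
  note anti = antitriangular_inverse_antidiagonal[OF this L0 K0 eigvecs_coords_inverse]
  show "k \<le> d \<Longrightarrow> (inverse_mat eigvecs * G) $$ (k,d-k) \<noteq> 0"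
    "k \<le> d \<Longrightarrow> (H * eigvecs) $$ (d-k,k) \<noteq> 0"
    using anti by auto
qed

lemma irred_tridiagonal_Bs_if_bidiagonal:
  assumes U: "H * As * G = upper_bidiag d ths \<phi>" and \<phi>: "\<forall>i\<in>{1..d}. \<phi> i \<noteq> 0"
  shows "irred_tridiagonal Bs"
proof (rule irred_tridiagonalI[OF Bs_carrier])
  have L: "inverse_mat eigvecs * G \<in> carrier_mat (Suc d) (Suc d)"
    and K: "H * eigvecs \<in> carrier_mat (Suc d) (Suc d)"
    using G_H_inverse inverse_eigvecs by auto
  have "\<forall>a\<le>d. \<forall>m\<le>d. a + 1 < m \<longrightarrow> upper_bidiag d ths \<phi> $$ (a,m) = 0"
    by (auto simp: upper_bidiag_def)
  note conj = antitriangular_conj_hessenberg[OF L upper_bidiag_carrier K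
      change_of_basis_antitriangular(1,2) this, folded U, folded Bs_eq_conj]
  show "\<forall>i<Suc d. \<forall>j<Suc d. j + 1 < i \<longrightarrow> Bs $$ (i,j) = 0" using conj(1) by auto
  show "\<forall>i. i + 1 < Suc d \<longrightarrow> Bs $$ (i+1,i) \<noteq> 0"
  proof (intro allI impI)
    fix i assume "i + 1 < Suc d"
    then have i: "i < d" by simp
    obtain k where k: "d - i = Suc k" using i by (metis Suc_diff_Suc)
    then have "upper_bidiag d ths \<phi> $$ (d-i-1,d-i) = \<phi> (d-i)" by (simp add: upper_bidiag_def)
    then show "Bs $$ (i+1,i) \<noteq> 0"
      using conj(2)[OF i] \<phi> i change_of_basis_antitriangular(3)[of "i+1"]
        change_of_basis_antitriangular(4)[of i]
      by (simp add: U)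
  qed
  show "\<forall>i<Suc d. \<forall>j<Suc d. i + 1 < j \<longrightarrow> Bs $$ (i,j) = 0" using Bs_upper(1) by simp
  show "\<forall>i. i + 1 < Suc d \<longrightarrow> Bs $$ (i,i+1) \<noteq> 0" by (rule Bs_superdiag_nonzero)
qed

end

subsection \<open>The Krylov basis\<close>

primrec krylov :: "nat \<Rightarrow> 'a vec" where
  "krylov 0 = unit_vec (Suc d) 0"
| "krylov (Suc i) = (A - th (d - i) \<cdot>\<^sub>m 1\<^sub>m (Suc d)) *\<^sub>v krylov i"

lemma krylov_carrier [simp]: "krylov i \<in> carrier_vec (Suc d)"
  by (induction i) (simp_all add: lower_bidiag_minus_smult_one mult_mat_vec_carrier[of _ "Suc d" "Suc d"])

lemma krylov_Suc_index:
  assumes m: "m \<le> d"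
  shows "krylov (Suc i) $ m =
    (th m - th (d - i)) * krylov i $ m + (if 0 < m then krylov i $ (m-1) else 0)"
proof -
  have "krylov (Suc i) = lower_bidiag d (\<lambda>k. th k - th (d - i)) *\<^sub>v krylov i"
    by (simp add: lower_bidiag_minus_smult_one)
  then show ?thesis by (simp only: lower_bidiag_mult_vec_index[OF krylov_carrier m])
qed

lemma krylov_upper_unitriangular:
  "i < m \<Longrightarrow> m \<le> d \<Longrightarrow> krylov i $ m = 0" "i \<le> d \<Longrightarrow> krylov i $ i = 1"
proof -
  have "(\<forall>m\<le>d. i < m \<longrightarrow> krylov i $ m = 0) \<and> (i \<le> d \<longrightarrow> krylov i $ i = 1)"
  proof (induction i)
    case (Suc i)
    then show ?case by (auto simp: krylov_Suc_index simp del: krylov.simps)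
  qed auto
  then show "i < m \<Longrightarrow> m \<le> d \<Longrightarrow> krylov i $ m = 0" "i \<le> d \<Longrightarrow> krylov i $ i = 1" by auto
qed

lemma eigvecs_coords_krylov:
  assumes a: "a \<le> d"
  shows "(inverse_mat eigvecs *\<^sub>v krylov i) $ a =
    (\<Prod>k<i. th a - th (d - k)) * (inverse_mat eigvecs *\<^sub>v krylov 0) $ a"
proof (induction i)
  case (Suc i)
  let ?c = "th (d - i)"
  have QA: "inverse_mat eigvecs * (A - ?c \<cdot>\<^sub>m 1\<^sub>m (Suc d)) =
      mat_diag (Suc d) (\<lambda>a. th a - ?c) * inverse_mat eigvecs"
    using mult_minus_smult_one_intertwine[OF inverse_eigvecs(1) lower_bidiag_carrier mat_diag_dim
        similar_mat_wit_mult_eqs(2)[OF similar_A_diag lower_bidiag_carrier]]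
    by (simp add: mat_diag_minus_smult_one)
  have "A - ?c \<cdot>\<^sub>m 1\<^sub>m (Suc d) \<in> carrier_mat (Suc d) (Suc d)"
    by (simp add: lower_bidiag_minus_smult_one)
  from assoc_mult_mat_vec[OF inverse_eigvecs(1) this krylov_carrier, of i]
  have "inverse_mat eigvecs *\<^sub>v krylov (Suc i) =
      (mat_diag (Suc d) (\<lambda>a. th a - ?c) * inverse_mat eigvecs) *\<^sub>v krylov i"
    by (simp add: QA)
  also have "\<dots> = mat_diag (Suc d) (\<lambda>a. th a - ?c) *\<^sub>v (inverse_mat eigvecs *\<^sub>v krylov i)"
    using inverse_eigvecs(1) by (intro assoc_mult_mat_vec[OF mat_diag_dim]) auto
  finally have "inverse_mat eigvecs *\<^sub>v krylov (Suc i) =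
      mat_diag (Suc d) (\<lambda>a. th a - ?c) *\<^sub>v (inverse_mat eigvecs *\<^sub>v krylov i)" .
  then show ?case using Suc a inverse_eigvecs(1) by (simp add: mat_diag_mult_vec_index)
qed simp

lemma krylov_Suc_d: "krylov (Suc d) = 0\<^sub>v (Suc d)"
proof -
  have "(inverse_mat eigvecs *\<^sub>v krylov (Suc d)) $ a = 0" if "a \<le> d" for a
  proof -
    have "(\<Prod>k<Suc d. th a - th (d - k)) = 0"
      using that by (intro prod_zero) (auto intro!: bexI[of _ "d - a"])
    then show ?thesis using eigvecs_coords_krylov[OF that, of "Suc d"] by (simp del: krylov.simps)
  qed
  then have "inverse_mat eigvecs *\<^sub>v krylov (Suc d) = 0\<^sub>v (Suc d)"
    using inverse_eigvecs(1) by (intro eq_vecI) auto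
  have "krylov (Suc d) = eigvecs *\<^sub>v (inverse_mat eigvecs *\<^sub>v krylov (Suc d))"
    using inverse_eigvecs
    by (simp add: assoc_mult_mat_vec[of _ "Suc d" "Suc d" _ "Suc d", symmetric] del: krylov.simps)
  also have "\<dots> = 0\<^sub>v (Suc d)"
    unfolding \<open>inverse_mat eigvecs *\<^sub>v krylov (Suc d) = 0\<^sub>v (Suc d)\<close>
    by (rule eq_vecI) (auto simp: scalar_prod_def)
  finally show ?thesis .
qed

definition krylov_mat :: "'a mat" where
  "krylov_mat = mat (Suc d) (Suc d) (\<lambda>(m,i). krylov i $ m)"

lemma krylov_mat_carrier [simp]: "krylov_mat \<in> carrier_mat (Suc d) (Suc d)"
  and krylov_mat_dim [simp]: "dim_row krylov_mat = Suc d" "dim_col krylov_mat = Suc d"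
  by (simp_all add: krylov_mat_def)

lemma A_krylov_mat: "A * krylov_mat = krylov_mat * A_rev"
proof (rule eq_matI)
  fix m i assume "m < dim_row (krylov_mat * A_rev)" "i < dim_col (krylov_mat * A_rev)"
  then have m: "m \<le> d" and i: "i \<le> d" by (auto simp: krylov_mat_def)
  have "(A * krylov_mat) $$ (m,i) = th m * krylov i $ m + (if 0 < m then krylov i $ (m-1) else 0)"
    using lower_bidiag_mult_index[OF krylov_mat_carrier m, of i] m i by (simp add: krylov_mat_def)
  also have "\<dots> = krylov i $ m * th (d - i) + krylov (Suc i) $ m"
    using krylov_Suc_index[OF m, of i] by (simp del: krylov.simps add: algebra_simps)
  also have "\<dots> = (krylov_mat * A_rev) $$ (m,i)"
    using mult_lower_bidiag_index[OF krylov_mat_carrier _ i, of m] m i krylov_Suc_d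
    by (cases "i < d") (auto simp: krylov_mat_def simp del: krylov.simps)
  finally show "(A * krylov_mat) $$ (m,i) = (krylov_mat * A_rev) $$ (m,i)" .
qed (auto simp: krylov_mat_def)

lemma similar_krylov: "similar_mat_wit A A_rev krylov_mat (inverse_mat krylov_mat)"
proof (rule similar_mat_wit_inverse_mat[OF lower_bidiag_carrier lower_bidiag_carrier
      krylov_mat_carrier _ A_krylov_mat])
  show "det krylov_mat \<noteq> 0"
    by (subst det_upper_unitriangular[OF krylov_mat_carrier])
      (auto simp: krylov_mat_def krylov_upper_unitriangular)
qed

definition As_krylov :: "'a mat" where
  "As_krylov = inverse_mat krylov_mat * As * krylov_mat"

lemma As_krylov_upper_triangular:
  assumes i: "i \<le> d"
  shows "\<And>k. k \<le> d \<Longrightarrow> i < k \<Longrightarrow> As_krylov $$ (k,i) = 0" and "As_krylov $$ (i,i) = ths i"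
proof -
  note G = similar_mat_witD2[OF lower_bidiag_carrier similar_krylov]
  have U: "As_krylov \<in> carrier_mat (Suc d) (Suc d)"
    unfolding As_krylov_def using G(6,7) by (intro mult_carrier_mat[of _ "Suc d" "Suc d"]) auto
  have GU: "krylov_mat * As_krylov = As * krylov_mat"
    using similar_mat_wit_mult_eqs(1)[OF similar_mat_wit_conj[OF upper_bidiag_carrier G(6,7,1,2)]
        upper_bidiag_carrier] unfolding As_krylov_def by simp
  have y: "(As * krylov_mat) $$ (k,i) =
      ths k * krylov_mat $$ (k,i) + (if k < d then ph (k+1) * krylov_mat $$ (k+1,i) else 0)"
    if "k \<le> d" for k using upper_bidiag_mult_index[OF krylov_mat_carrier that, of i] i by simp
  have tri: "\<forall>k<Suc d. \<forall>l<Suc d. l < k \<longrightarrow> krylov_mat $$ (k,l) = 0"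
    and diag: "\<forall>k<Suc d. krylov_mat $$ (k,k) = 1"
    by (auto simp: krylov_mat_def krylov_upper_unitriangular)
  have "\<forall>k<Suc d. i < k \<longrightarrow> (krylov_mat * As_krylov) $$ (k,i) = 0"
    unfolding GU using y i tri by auto
  note r = upper_triangular_mult_col_zeros[OF krylov_mat_carrier U _ tri _ this]
  show "As_krylov $$ (k,i) = 0" if "k \<le> d" "i < k" for k
    using r(1) diag i that by auto
  have "(As * krylov_mat) $$ (i,i) = ths i"
    using y[OF i] diag tri i by (cases "i < d") simp_all
  then show "As_krylov $$ (i,i) = ths i"
    using r(2) diag i by (simp add: GU)
qed

lemma As_krylov_upper_bidiag:
  assumes irr: "irred_tridiagonal Bs"
  shows "As_krylov = upper_bidiag d ths (\<lambda>i. As_krylov $$ (i-1,i))"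
    and "\<forall>i\<in>{1..d}. As_krylov $$ (i-1,i) \<noteq> 0"
proof -
  note G = similar_mat_witD2[OF lower_bidiag_carrier similar_krylov]
  note coords = change_of_basis_antitriangular[OF similar_krylov]
  have L: "inverse_mat eigvecs * krylov_mat \<in> carrier_mat (Suc d) (Suc d)"
    and K: "inverse_mat krylov_mat * eigvecs \<in> carrier_mat (Suc d) (Suc d)"
    using G inverse_eigvecs by auto
  have "\<forall>a\<le>d. \<forall>m\<le>d. m + 1 < a \<longrightarrow> Bs $$ (a,m) = 0"
    using irr unfolding irred_tridiagonal_def tridiagonal_def by auto
  note conj = antitriangular_conj_hessenberg_transpose[OF L Bs_carrier K coords(1,2) this,
      folded As_in_G_eq_conj[OF similar_krylov], folded As_krylov_def]
  show "\<forall>i\<in>{1..d}. As_krylov $$ (i-1,i) \<noteq> 0"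
  proof
    fix i assume i: "i \<in> {1..d}"
    have "Bs $$ (d-i+1,d-i) \<noteq> 0"
      using irr i unfolding irred_tridiagonal_def by (auto simp: Suc_diff_le)
    moreover have "(inverse_mat krylov_mat * eigvecs) $$ (i-1,d-i+1) \<noteq> 0"
      using coords(4)[of "d-i+1"] i by (simp add: Suc_diff_le Suc_le_eq)
    moreover have "(inverse_mat eigvecs * krylov_mat) $$ (d-i,i) \<noteq> 0"
      using coords(3)[of "d-i"] i by simp
    ultimately show "As_krylov $$ (i-1,i) \<noteq> 0" using conj(2)[of i] i by simp
  qed
  show "As_krylov = upper_bidiag d ths (\<lambda>i. As_krylov $$ (i-1,i))"
  proof (rule eq_matI)
    fix k i assume "k < dim_row (upper_bidiag d ths (\<lambda>i. As_krylov $$ (i-1,i)))"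
      "i < dim_col (upper_bidiag d ths (\<lambda>i. As_krylov $$ (i-1,i)))"
    then have k: "k \<le> d" and i: "i \<le> d" by auto
    consider "i < k" | "k = i" | "i = k + 1" | "k + 1 < i" by linarith
    then show "As_krylov $$ (k,i) = upper_bidiag d ths (\<lambda>i. As_krylov $$ (i-1,i)) $$ (k,i)"
      by cases (use k i As_krylov_upper_triangular conj(1) in \<open>auto simp: upper_bidiag_def\<close>)
  qed (use G in \<open>auto simp: As_krylov_def\<close>)
qed

lemma bidiagonal_similarity_iff_irred_tridiagonal_Bs:
  "(\<exists>G H \<phi>. similar_mat_wit A A_rev G H \<and> similar_mat_wit As (upper_bidiag d ths \<phi>) G H \<and>
      (\<forall>i\<in>{1..d}. \<phi> i \<noteq> 0)) \<longleftrightarrow> irred_tridiagonal Bs"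
proof
  assume "\<exists>G H \<phi>. similar_mat_wit A A_rev G H \<and> similar_mat_wit As (upper_bidiag d ths \<phi>) G H \<and>
      (\<forall>i\<in>{1..d}. \<phi> i \<noteq> 0)"
  then obtain G H \<phi> where simG: "similar_mat_wit A A_rev G H"
    and simU: "similar_mat_wit As (upper_bidiag d ths \<phi>) G H" and \<phi>: "\<forall>i\<in>{1..d}. \<phi> i \<noteq> 0"
    by blast
  have "upper_bidiag d ths \<phi> = H * As * G"
    by (rule similar_mat_witD2(3)[OF upper_bidiag_carrier similar_mat_wit_sym[OF simU]])
  then show "irred_tridiagonal Bs"
    using irred_tridiagonal_Bs_if_bidiagonal[OF simG _ \<phi>] by simp
next
  assume irr: "irred_tridiagonal Bs"
  note G = similar_mat_witD2[OF lower_bidiag_carrier similar_krylov]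
  have "similar_mat_wit As As_krylov krylov_mat (inverse_mat krylov_mat)"
    unfolding As_krylov_def by (rule similar_mat_wit_conj[OF upper_bidiag_carrier G(6,7,1,2)])
  then have "similar_mat_wit As (upper_bidiag d ths (\<lambda>i. As_krylov $$ (i-1,i)))
      krylov_mat (inverse_mat krylov_mat)"
    by (subst (asm) As_krylov_upper_bidiag(1)[OF irr])
  then show "\<exists>G H \<phi>. similar_mat_wit A A_rev G H \<and> similar_mat_wit As (upper_bidiag d ths \<phi>) G H \<and>
      (\<forall>i\<in>{1..d}. \<phi> i \<noteq> 0)"
    using similar_krylov As_krylov_upper_bidiag(2)[OF irr] by blast
qed

end

theorem theorem6p3:
  fixes d :: nat and th ths ph :: "nat \<Rightarrow> 'a::field"
  assumes th_dist: "\<forall>i \<le> d. \<forall>j \<le> d. i \<noteq> j \<longrightarrow> th i \<noteq> th j"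
    and ths_dist: "\<forall>i \<le> d. \<forall>j \<le> d. i \<noteq> j \<longrightarrow> ths i \<noteq> ths j"
    and ph_nz: "\<forall>i \<in> {1..d}. ph i \<noteq> 0"
  defines "A \<equiv> lower_bidiag d th"
    and "As \<equiv> upper_bidiag d ths ph"
  shows "(leonard_pair A As \<longleftrightarrow>
           (\<exists>G H phi. similar_mat_wit A (lower_bidiag d (\<lambda>i. th (d - i))) G H \<and>
                      similar_mat_wit As (upper_bidiag d ths phi) G H \<and>
                      (\<forall>i \<in> {1..d}. phi i \<noteq> 0)))
       \<and> (\<forall>G H phi. leonard_pair A As \<longrightarrow>
              similar_mat_wit A (lower_bidiag d (\<lambda>i. th (d - i))) G H \<longrightarrow>
              similar_mat_wit As (upper_bidiag d ths phi) G H \<longrightarrow>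
              (\<forall>i \<in> {1..d}. phi i \<noteq> 0) \<longrightarrow>
              split_sequence d A As (\<lambda>i. th (d - i)) ths phi)"
proof -
  interpret P: bidiagonal_pair d th ths ph
    using th_dist ths_dist ph_nz by unfold_locales
  have "leonard_pair A As \<longleftrightarrow>
      (\<exists>G H phi. similar_mat_wit A (lower_bidiag d (\<lambda>i. th (d - i))) G H \<and>
        similar_mat_wit As (upper_bidiag d ths phi) G H \<and> (\<forall>i \<in> {1..d}. phi i \<noteq> 0))"
    unfolding A_def As_def P.leonard_pair_iff_irred_tridiagonal_Bs
      P.bidiagonal_similarity_iff_irred_tridiagonal_Bs ..
  moreover have "split_sequence d A As (\<lambda>i. th (d - i)) ths phi"
    if "similar_mat_wit A (lower_bidiag d (\<lambda>i. th (d - i))) G H"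
      "similar_mat_wit As (upper_bidiag d ths phi) G H" "\<forall>i \<in> {1..d}. phi i \<noteq> 0" for G H phi
    using split_sequence_of_bidiagonal_similarity that .
  ultimately show ?thesis by blast
qed

end
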